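(* (a) Given a valuation measure $\overline{\mathbb{Q}}$ with respect to the basket, there exists a unique numéraire-consistent family of probability measures $(\mathbb{Q}_i)_{i=1}^d$ such that $\sum_i\mathbb{Q}_i\sim\overline{\mathbb{Q}}$ and $$\mathbb{E}^{\overline{\mathbb{Q}}}_r[\overline C]=\sum_{j\in\mathfrak{A}(r)}\overline S_j(r)\,\mathbb{E}^{\mathbb{Q}_j}_r\Big[\frac{C_j}{|\mathfrak{A}(T)|}\Big]\qquad( * )$$ for all $r\in[0,T]$ and all $C\in\mathcal{C}$ with $\overline C\in L^1(\overline{\mathbb{Q}})$. (b) Given a numéraire-consistent family of probability measures $(\mathbb{Q}_i)_{i=1}^d$, there exists a unique valuation measure $\overline{\mathbb{Q}}\sim\sum_i\mathbb{Q}_i$ with respect to the basket that satisfies $( * )$ for all $r\in[0,T]$ and all $C\in\mathcal{C}$ with $C_i\in L^1(\mathbb{Q}_i)$ for all $i$. (c) Let $\overline{\mathbb{Q}}$ be a valuation measure with respect to the basket, let $(\mathbb{Q}_i)_i$ be the family from (a), and fix $r\in[0,T]$. If $C\in\mathcal{C}$ satisfies $\overline C=\overline C\mathbf{1}_{\{i\in\mathfrak{A}(T)\}}$ $\overline{\mathbb{Q}}$-a.s. for some $i$, and $\overline C\in L^1(\overline{\mathbb{Q}})$, then $\mathbb{E}^{\overline{\mathbb{Q}}}_r[\overline C]=\overline S_i(r)\,\mathbb{E}^{\mathbb{Q}_i}_r[C_i]$.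
   Context: Fix $T>0$, $d\in\mathbb N$, and a filtered space $(\Omega,\mathcal{F}(T),(\mathcal{F}(t))_{t\in[0,T]})$ with right-continuous filtration and trivial $\mathcal{F}(0)$. For $x,y\in[0,\infty]$ the product $xy$ is defined except when one is $0$ and the other is $\infty$. An exchange matrix is $s=(s_{i,j})\in[0,\infty]^{d\times d}$ with $s_{i,i}=1$ and $s_{i,j}s_{j,k}=s_{i,k}$ for all $i,j,k$ whenever the product is defined. $S=(S_{i,j})_{i,j=1}^d$ is a right-continuous adapted $[0,\infty]^{d\times d}$-valued process such that $S(t)$ is an exchange matrix for every $t$. Active currencies: $\mathfrak{A}(t)=\{i:\sum_jS_{i,j}(t)<\infty\}$, with $\mathfrak A(0)=\{1,\dots,d\}$. Basket prices: $\overline S_i=1/\sum_jS_{i,j}\in[0,1]$. A value vector for an exchange matrix $s$ is $v\in[0,\infty]^d$ with $s_{i,j}v_j=v_i$ for all $i,j$ whenever the product is defined; $\mathcal{C}$ is the set of $\mathcal{F}(T)$-measurable value vectors for $S(T)$. For $C\in\mathcal{C}$, $\overline C=\frac{1}{|\mathfrak{A}(T)|}\sum_{j\in\mathfrak{A}(T)}\overline S_j(T)C_j$ (its value in units of the basket; it equals $\overline S_i(T)C_i$ for any $i\in\mathfrak A(T)$). A valuation measure with respect to the basket is a probability measure $\overline{\mathbb{Q}}$ on $(\Omega,\mathcal{F}(T))$ under which $\overline S=(\overline S_i)_i$ is a local martingale (equivalently, since bounded, a martingale). A family $(\mathbb{Q}_i)_{i=1}^d$ of probability measures on $(\Omega,\mathcal{F}(T))$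 is numéraire-consistent if $\mathbb{E}^{\mathbb{Q}_i}[S_{i,j}(t)\mathbf{1}_A]=S_{i,j}(0)\,\mathbb{Q}_j(A\cap\{S_{j,i}(t)>0\})$ for all $i,j$, $t\in[0,T]$, $A\in\mathcal{F}(t)$. $\mathbb{E}^{\mathbb Q}_r$ denotes conditional expectation under $\mathbb Q$ given $\mathcal F(r)$. *)

theory Defs
  imports "HOL-Probability.Probability"
begin

text \<open>The filtration is F :: real => 'a measure (only space and sets matter);
  F T is the measurable space (Omega, F(T)).
  S t w i j is the (i,j) entry of the exchange matrix S(t) at w.\<close>

definition prod_defined :: "ennreal \<Rightarrow> ennreal \<Rightarrow> bool" where
  "prod_defined x y \<longleftrightarrow> \<not> ((x = 0 \<and> y = \<infinity>) \<or> (x = \<infinity> \<and> y = 0))"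

definition exchange_matrix :: "nat \<Rightarrow> (nat \<Rightarrow> nat \<Rightarrow> ennreal) \<Rightarrow> bool" where
  "exchange_matrix d s \<longleftrightarrow>
     (\<forall>i\<in>{1..d}. s i i = 1) \<and>
     (\<forall>i\<in>{1..d}. \<forall>j\<in>{1..d}. \<forall>k\<in>{1..d}.
        prod_defined (s i j) (s j k) \<longrightarrow> s i j * s j k = s i k)"

definition value_vector :: "nat \<Rightarrow> (nat \<Rightarrow> nat \<Rightarrow> ennreal) \<Rightarrow> (nat \<Rightarrow> ennreal) \<Rightarrow> bool" where
  "value_vector d s v \<longleftrightarrow>
     (\<forall>i\<in>{1..d}. \<forall>j\<in>{1..d}. prod_defined (s i j) (v j) \<longrightarrow> s i j * v j = v i)"

definition filtration :: "real \<Rightarrow> (real \<Rightarrow> 'a measure) \<Rightarrow> bool" where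
  "filtration T F \<longleftrightarrow> T > 0 \<and>
     (\<forall>t\<in>{0..T}. space (F t) = space (F T)) \<and>
     (\<forall>s t. 0 \<le> s \<and> s \<le> t \<and> t \<le> T \<longrightarrow> sets (F s) \<subseteq> sets (F t)) \<and>
     (\<forall>t\<in>{0..<T}. sets (F t) = (\<Inter>u\<in>{t<..T}. sets (F u))) \<and>
     sets (F 0) = {{}, space (F T)}"

definition exchange_process ::
  "nat \<Rightarrow> real \<Rightarrow> (real \<Rightarrow> 'a measure) \<Rightarrow> (real \<Rightarrow> 'a \<Rightarrow> nat \<Rightarrow> nat \<Rightarrow> ennreal) \<Rightarrow> bool" where
  "exchange_process d T F S \<longleftrightarrow>
     (\<forall>t\<in>{0..T}. \<forall>i\<in>{1..d}. \<forall>j\<in>{1..d}. (\<lambda>w. S t w i j) \<in> borel_measurable (F t)) \<and>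
     (\<forall>t\<in>{0..<T}. \<forall>w\<in>space (F T). \<forall>i\<in>{1..d}. \<forall>j\<in>{1..d}.
        ((\<lambda>u. S u w i j) \<longlongrightarrow> S t w i j) (at_right t)) \<and>
     (\<forall>t\<in>{0..T}. \<forall>w\<in>space (F T). exchange_matrix d (S t w))"

definition active ::
  "nat \<Rightarrow> (real \<Rightarrow> 'a \<Rightarrow> nat \<Rightarrow> nat \<Rightarrow> ennreal) \<Rightarrow> real \<Rightarrow> 'a \<Rightarrow> nat set" where
  "active d S t w = {i\<in>{1..d}. (\<Sum>j\<in>{1..d}. S t w i j) < \<infinity>}"

definition basket ::
  "nat \<Rightarrow> (real \<Rightarrow> 'a \<Rightarrow> nat \<Rightarrow> nat \<Rightarrow> ennreal) \<Rightarrow> nat \<Rightarrow> real \<Rightarrow> 'a \<Rightarrow> real" where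
  "basket d S i t w = enn2real (inverse (\<Sum>j\<in>{1..d}. S t w i j))"

definition claims ::
  "nat \<Rightarrow> real \<Rightarrow> (real \<Rightarrow> 'a measure) \<Rightarrow> (real \<Rightarrow> 'a \<Rightarrow> nat \<Rightarrow> nat \<Rightarrow> ennreal)
     \<Rightarrow> ('a \<Rightarrow> nat \<Rightarrow> ennreal) set" where
  "claims d T F S = {C. (\<forall>j\<in>{1..d}. (\<lambda>w. C w j) \<in> borel_measurable (F T)) \<and>
                        (\<forall>w\<in>space (F T). value_vector d (S T w) (C w))}"

definition claim_bar ::
  "nat \<Rightarrow> real \<Rightarrow> (real \<Rightarrow> 'a \<Rightarrow> nat \<Rightarrow> nat \<Rightarrow> ennreal) \<Rightarrow> ('a \<Rightarrow> nat \<Rightarrow> ennreal) \<Rightarrow> 'a \<Rightarrow> ennreal" where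
  "claim_bar d T S C w =
     (\<Sum>j\<in>active d S T w. ennreal (basket d S j T w) * C w j) / of_nat (card (active d S T w))"

definition prob_on :: "real \<Rightarrow> (real \<Rightarrow> 'a measure) \<Rightarrow> 'a measure \<Rightarrow> bool" where
  "prob_on T F Q \<longleftrightarrow> prob_space Q \<and> space Q = space (F T) \<and> sets Q = sets (F T)"

definition L1_nn :: "'a measure \<Rightarrow> ('a \<Rightarrow> ennreal) \<Rightarrow> bool" where
  "L1_nn Q f \<longleftrightarrow> f \<in> borel_measurable Q \<and> (\<integral>\<^sup>+ w. f w \<partial>Q) < \<infinity>"

text \<open>Valuation measure w.r.t. the basket: Sbar is a (bounded, hence true) martingale.\<close>
definition valuation_measure ::
  "nat \<Rightarrow> real \<Rightarrow> (real \<Rightarrow> 'a measure) \<Rightarrow> (real \<Rightarrow> 'a \<Rightarrow> nat \<Rightarrow> nat \<Rightarrow> ennreal) \<Rightarrow> 'a measure \<Rightarrow> bool" where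
  "valuation_measure d T F S Qb \<longleftrightarrow> prob_on T F Qb \<and>
     (\<forall>i\<in>{1..d}. \<forall>s t. 0 \<le> s \<and> s \<le> t \<and> t \<le> T \<longrightarrow>
        (AE w in Qb. real_cond_exp Qb (F s) (basket d S i t) w = basket d S i s w))"

text \<open>Numeraire-consistent family. S(0) is deterministic (F(0) trivial), so S_ij(0)
  is evaluated at an arbitrary sample point w0.\<close>
definition numeraire_consistent ::
  "nat \<Rightarrow> real \<Rightarrow> (real \<Rightarrow> 'a measure) \<Rightarrow> (real \<Rightarrow> 'a \<Rightarrow> nat \<Rightarrow> nat \<Rightarrow> ennreal) \<Rightarrow> (nat \<Rightarrow> 'a measure) \<Rightarrow> bool" where
  "numeraire_consistent d T F S Q \<longleftrightarrow>
     (\<forall>i\<in>{1..d}. prob_on T F (Q i)) \<and>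
     (\<forall>i\<in>{1..d}. \<forall>j\<in>{1..d}. \<forall>t\<in>{0..T}. \<forall>A\<in>sets (F t). \<forall>w0\<in>space (F T).
        (\<integral>\<^sup>+ w. S t w i j * indicator A w \<partial>(Q i)) =
        S 0 w0 i j * emeasure (Q j) (A \<inter> {w\<in>space (F T). S t w j i > 0}))"

definition equiv_sum :: "nat \<Rightarrow> real \<Rightarrow> (real \<Rightarrow> 'a measure) \<Rightarrow> (nat \<Rightarrow> 'a measure) \<Rightarrow> 'a measure \<Rightarrow> bool" where
  "equiv_sum d T F Q Qb \<longleftrightarrow>
     (\<forall>A\<in>sets (F T). emeasure Qb A = 0 \<longleftrightarrow> (\<forall>i\<in>{1..d}. emeasure (Q i) A = 0))"

definition star_identity ::
  "nat \<Rightarrow> real \<Rightarrow> (real \<Rightarrow> 'a measure) \<Rightarrow> (real \<Rightarrow> 'a \<Rightarrow> nat \<Rightarrow> nat \<Rightarrow> ennreal)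
     \<Rightarrow> (nat \<Rightarrow> 'a measure) \<Rightarrow> 'a measure \<Rightarrow> real \<Rightarrow> ('a \<Rightarrow> nat \<Rightarrow> ennreal) \<Rightarrow> bool" where
  "star_identity d T F S Q Qb r C \<longleftrightarrow>
     (AE w in Qb. nn_cond_exp Qb (F r) (claim_bar d T S C) w =
        (\<Sum>j\<in>active d S r w. ennreal (basket d S j r w) *
           nn_cond_exp (Q j) (F r) (\<lambda>x. C x j / of_nat (card (active d S T x))) w))"

end

theory Submission
  imports Defs
begin

text \<open>Under a valuation measure Qb every basket price Sbar_i is a bounded martingale, so
  dQ_i = Sbar_i(T) / Sbar_i(0) dQb defines probability measures. Since the exchange rates satisfy
  S_ij Sbar_i = Sbar_j wherever S_ji > 0, the martingale property of Sbar_j turns into numeraire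
  consistency of (Q_i), and Bayes' formula E^Qb_r[Sbar_j(T) X] = Sbar_j(r) E^Q_j_r[X], summed over
  the active currencies, is the identity (*). Conversely, for a numeraire-consistent family the
  mixture Sum_i Sbar_i(0) Q_i is a valuation measure which changes numeraire back into the Q_i.
  Uniqueness in both directions follows from (*) at r = 0 applied to the claims paying one unit of
  currency i on an event B, which forces E^Qb[Sbar_i(T) 1_B] = Sbar_i(0) Q_i(B); part (c) is (*)
  for a claim whose basket value vanishes where i is inactive.\<close>

section \<open>Exchange matrices\<close>

definition row_sum :: "nat \<Rightarrow> (nat \<Rightarrow> nat \<Rightarrow> ennreal) \<Rightarrow> nat \<Rightarrow> ennreal" where
  "row_sum d s i = (\<Sum>j\<in>{1..d}. s i j)"

definition active_set :: "nat \<Rightarrow> (nat \<Rightarrow> nat \<Rightarrow> ennreal) \<Rightarrow> nat set" where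
  "active_set d s = {i\<in>{1..d}. row_sum d s i < \<top>}"

lemma active_eq_active_set: "active d S t w = active_set d (S t w)"
  unfolding active_def active_set_def row_sum_def by simp

locale exch_matrix =
  fixes d :: nat and s :: "nat \<Rightarrow> nat \<Rightarrow> ennreal"
  assumes exchange_matrix: "exchange_matrix d s"
begin

lemma diag: "i \<in> {1..d} \<Longrightarrow> s i i = 1"
  using exchange_matrix unfolding exchange_matrix_def by auto

lemma compose:
  "i \<in> {1..d} \<Longrightarrow> j \<in> {1..d} \<Longrightarrow> k \<in> {1..d} \<Longrightarrow> prod_defined (s i j) (s j k)
    \<Longrightarrow> s i j * s j k = s i k"
  using exchange_matrix unfolding exchange_matrix_def by auto

lemma row_sum_ge_1: "i \<in> {1..d} \<Longrightarrow> 1 \<le> row_sum d s i"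
  unfolding row_sum_def using member_le_sum[of i "{1..d}" "s i"] diag by auto

lemma active_set_iff: "i \<in> active_set d s \<longleftrightarrow> i \<in> {1..d} \<and> (\<forall>j\<in>{1..d}. s i j < \<top>)"
  unfolding active_set_def row_sum_def by (auto simp: ennreal_sum_less_top)

lemma active_set_subset: "active_set d s \<subseteq> {1..d}"
  unfolding active_set_def by auto

lemma finite_active_set: "finite (active_set d s)"
  using active_set_subset finite_subset by blast

text \<open>A row with the fewest infinite entries is active: if s i j = \<infinity>, then every infinite entry
  of row j is also one of row i, while s j j = 1 is not.\<close>
lemma active_set_nonempty:
  assumes "d \<ge> 1" shows "active_set d s \<noteq> {}"
proof -
  define N where "N i = card {k\<in>{1..d}. s i k = \<top>}" for i
  have "Min (N ` {1..d}) \<in> N ` {1..d}" using assms by (intro Min_in) auto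
  then obtain i where i: "i \<in> {1..d}" "N i = Min (N ` {1..d})" by auto
  have min: "N i \<le> N j" if "j \<in> {1..d}" for j using i that by auto
  have "i \<in> active_set d s"
  proof (rule ccontr)
    assume "i \<notin> active_set d s"
    then obtain j where j: "j \<in> {1..d}" "s i j = \<top>"
      using i active_set_iff by (auto simp: less_top[symmetric])
    have "{k\<in>{1..d}. s j k = \<top>} \<subseteq> {k\<in>{1..d}. s i k = \<top>}"
    proof safe
      fix k assume k: "k \<in> {1..d}" "s j k = \<top>"
      then have "prod_defined (s i j) (s j k)" using j unfolding prod_defined_def by auto
      then show "s i k = \<top>" using compose[OF i(1) j(1) k(1)] j k by simp
    qed
    moreover have "j \<notin> {k\<in>{1..d}. s j k = \<top>}" "j \<in> {k\<in>{1..d}. s i k = \<top>}"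
      using diag j by auto
    ultimately have "N j < N i" unfolding N_def by (intro psubset_card_mono) auto
    with min[OF j(1)] show False by simp
  qed
  then show ?thesis by auto
qed

lemma card_active_set_pos: "d \<ge> 1 \<Longrightarrow> card (active_set d s) \<noteq> 0"
  using active_set_nonempty finite_active_set by simp

lemma entry_to_active_nonzero:
  assumes "i \<in> active_set d s" "j \<in> {1..d}" shows "s j i \<noteq> 0"
proof
  assume z: "s j i = 0"
  have "s i j < \<top>" using assms active_set_iff by auto
  then have "prod_defined (s i j) (s j i)" using z unfolding prod_defined_def by auto
  then have "s i j * s j i = 1" using compose diag assms active_set_iff by auto
  with z show False by simp
qed

lemma active_entry_finite: "i \<in> active_set d s \<Longrightarrow> j \<in> {1..d} \<Longrightarrow> s i j < \<top>"
  using active_set_iff by auto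

lemma active_entry_to_inactive:
  assumes "i \<in> active_set d s" "j \<in> {1..d}" "j \<notin> active_set d s" shows "s i j = 0"
proof (rule ccontr)
  assume nz: "s i j \<noteq> 0"
  obtain k where k: "k \<in> {1..d}" "s j k = \<top>"
    using assms active_set_iff by (auto simp: less_top[symmetric])
  have "prod_defined (s i j) (s j k)" using nz k unfolding prod_defined_def by auto
  then have "s i j * s j k = s i k" using compose[of i j k] assms k active_set_subset by auto
  then have "s i k = \<top>" using nz k by (simp add: ennreal_mult_top)
  with active_entry_finite[OF assms(1) k(1)] show False by simp
qed

lemma card_active_set_eq_nonzero_entries:
  assumes i: "i \<in> active_set d s"
  shows "(\<Sum>j\<in>{1..d}. of_bool (s i j \<noteq> 0)) = (of_nat (card (active_set d s)) :: 'b::semiring_1)"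
proof -
  have "{1..d} \<inter> {j. s i j \<noteq> 0} = active_set d s"
  proof (intro equalityI subsetI)
    fix j assume "j \<in> {1..d} \<inter> {j. s i j \<noteq> 0}"
    then show "j \<in> active_set d s" using active_entry_to_inactive[OF i] by auto
  next
    fix j assume j: "j \<in> active_set d s"
    then show "j \<in> {1..d} \<inter> {j. s i j \<noteq> 0}"
      using entry_to_active_nonzero[OF j] i active_set_subset by auto
  qed
  then show ?thesis by simp
qed

definition price :: "nat \<Rightarrow> ennreal" where
  "price i = inverse (row_sum d s i)"

lemma price_inactive: "i \<in> {1..d} \<Longrightarrow> i \<notin> active_set d s \<Longrightarrow> price i = 0"
  unfolding price_def active_set_def by (auto simp: less_top[symmetric])

lemma price_active: "i \<in> active_set d s \<Longrightarrow> price i \<noteq> 0"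
  unfolding price_def active_set_def by (auto simp: less_top)

lemma price_eq_0_of_zero_entry:
  assumes i: "i \<in> {1..d}" and j: "j \<in> {1..d}" and zero: "s j i = 0" shows "price i = 0"
proof (rule price_inactive[OF i])
  show "i \<notin> active_set d s" using entry_to_active_nonzero[OF _ j] zero by auto
qed

lemma price_le_1:
  assumes "i \<in> {1..d}" shows "price i \<le> 1"
proof -
  have "1 \<le> row_sum d s i" using row_sum_ge_1[OF assms] .
  then have "1 / row_sum d s i \<le> 1"
    by (intro divide_le_posI_ennreal) (auto intro: less_le_trans[OF zero_less_one])
  then show ?thesis unfolding price_def by (simp add: divide_ennreal_def)
qed

lemma row_sum_factor:
  assumes "i \<in> active_set d s" "j \<in> active_set d s" shows "row_sum d s i = s i j * row_sum d s j"
proof -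
  have "s i k = s i j * s j k" if k: "k \<in> {1..d}" for k
  proof -
    have "s i j \<noteq> 0" "s i j < \<top>"
      using entry_to_active_nonzero[OF assms(2)] active_entry_finite[OF assms(1)] assms active_set_subset
      by auto
    then have "prod_defined (s i j) (s j k)" unfolding prod_defined_def by auto
    moreover have "i \<in> {1..d}" "j \<in> {1..d}" using assms active_set_subset by auto
    ultimately show ?thesis using compose k by metis
  qed
  then show ?thesis unfolding row_sum_def by (simp add: sum_distrib_left)
qed

lemma entry_mult_price:
  assumes i: "i \<in> {1..d}" and j: "j \<in> {1..d}"
  shows "s i j * price i = price j * (if s j i \<noteq> 0 then 1 else 0)"
proof (cases "i \<in> active_set d s")
  case i_act: True
  show ?thesis
  proof (cases "j \<in> active_set d s")
    case j_act: True
    have nz: "s i j \<noteq> 0" "s i j < \<top>"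
      using entry_to_active_nonzero[OF j_act i] active_entry_finite[OF i_act j] by auto
    have "row_sum d s j < \<top>" using j_act unfolding active_set_def by auto
    then have "s i j * price i = s i j * (inverse (s i j) * price j)"
      unfolding price_def row_sum_factor[OF i_act j_act] using nz by (simp add: ennreal_inverse_mult)
    also have "\<dots> = price j"
      using nz by (simp add: mult.assoc[symmetric] ennreal_divide_self[unfolded divide_ennreal_def])
    finally show ?thesis using entry_to_active_nonzero[OF i_act j] by simp
  next
    case False
    then show ?thesis using active_entry_to_inactive[OF i_act j False] price_inactive[OF j False] by simp
  qed
next
  case False
  have "s j i = 0" if "j \<in> active_set d s" using active_entry_to_inactive[OF that i False] .
  then have "price j * (if s j i \<noteq> 0 then 1 else 0) = 0" using price_inactive[OF j] by auto
  then show ?thesis using price_inactive[OF i False] by simp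
qed

lemma sum_price: assumes "d \<ge> 1" shows "(\<Sum>j\<in>{1..d}. price j) = 1"
proof -
  obtain i where i: "i \<in> active_set d s" using active_set_nonempty[OF assms] by auto
  have i1: "i \<in> {1..d}" using i active_set_subset by auto
  have "(\<Sum>j\<in>{1..d}. price j) = (\<Sum>j\<in>{1..d}. s i j * price i)"
    using entry_mult_price[OF i1] entry_to_active_nonzero[OF i] by (intro sum.cong) auto
  also have "\<dots> = row_sum d s i * price i" unfolding row_sum_def by (simp add: sum_distrib_right)
  also have "\<dots> = 1" unfolding price_def using row_sum_ge_1[OF i1] i unfolding active_set_def
    by (auto intro!: ennreal_divide_self[unfolded divide_ennreal_def])
  finally show ?thesis .
qed

lemma value_vector_price_eq:
  assumes v: "value_vector d s v" and i: "i \<in> active_set d s" and j: "j \<in> active_set d s"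
  shows "price i * v i = price j * v j"
proof -
  have ij: "i \<in> {1..d}" "j \<in> {1..d}" using i j active_set_subset by auto
  have "s i j \<noteq> 0" "s i j < \<top>" using entry_to_active_nonzero[OF j ij(1)] active_entry_finite[OF i ij(2)]
    by auto
  then have "prod_defined (s i j) (v j)" unfolding prod_defined_def by auto
  then have "v i = s i j * v j" using v ij unfolding value_vector_def by auto
  then have "price i * v i = (s i j * price i) * v j" by (simp add: mult_ac)
  also have "\<dots> = price j * v j" using entry_mult_price[OF ij] entry_to_active_nonzero[OF i ij(2)] by simp
  finally show ?thesis .
qed

end

section \<open>Conditional expectations and mixtures of measures\<close>

context sigma_finite_subalgebra
begin

lemma nn_cond_exp_sum_finite:
  assumes "finite J" "\<And>j. j \<in> J \<Longrightarrow> f j \<in> borel_measurable M"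
  shows "AE x in M. nn_cond_exp M F (\<lambda>x. \<Sum>j\<in>J. f j x) x = (\<Sum>j\<in>J. nn_cond_exp M F (f j) x)"
  using assms
proof (induction J rule: finite_induct)
  case empty
  have "AE x in M. 0 = nn_cond_exp M F (\<lambda>x. 0) x"
    by (rule nn_cond_exp_F_meas) simp
  then show ?case by auto
next
  case (insert a J)
  have "AE x in M. nn_cond_exp M F (f a) x + nn_cond_exp M F (\<lambda>x. \<Sum>j\<in>J. f j x) x
      = nn_cond_exp M F (\<lambda>x. f a x + (\<Sum>j\<in>J. f j x)) x"
    using insert.prems by (intro nn_cond_exp_sum) auto
  with insert show ?case by (auto elim!: eventually_elim2)
qed

lemma nn_cond_exp_cmult:
  "f \<in> borel_measurable M \<Longrightarrow> AE x in M. nn_cond_exp M F (\<lambda>x. c * f x) x = c * nn_cond_exp M F f x"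
  using nn_cond_exp_prod[of "\<lambda>_. c" f] by auto

lemma real_cond_exp_nonneg_eq:
  assumes "f \<in> borel_measurable M" "\<And>x. f x \<ge> 0"
  shows "AE x in M. real_cond_exp M F f x = enn2real (nn_cond_exp M F (\<lambda>x. ennreal (f x)) x)"
proof -
  have "(\<lambda>x. ennreal (- f x)) = (\<lambda>x. 0)" using assms(2) by (auto simp: ennreal_neg)
  moreover have "AE x in M. 0 = nn_cond_exp M F (\<lambda>x. 0) x"
    by (rule nn_cond_exp_F_meas) simp
  ultimately show ?thesis unfolding real_cond_exp_def by auto
qed

end

lemma nn_cond_exp_density:
  assumes sM: "sigma_finite_subalgebra M G" and sQ: "sigma_finite_subalgebra (density M Z) G"
    and [measurable]: "Z \<in> borel_measurable M" "X \<in> borel_measurable M"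
  shows "AE x in M. nn_cond_exp M G (\<lambda>x. Z x * X x) x
     = nn_cond_exp M G Z x * nn_cond_exp (density M Z) G X x"
proof -
  interpret sM: sigma_finite_subalgebra M G by (rule sM)
  interpret sQ: sigma_finite_subalgebra "density M Z" G by (rule sQ)
  have "AE x in M. nn_cond_exp M G Z x * nn_cond_exp (density M Z) G X x
      = nn_cond_exp M G (\<lambda>x. Z x * X x) x"
  proof (rule sM.nn_cond_exp_charact)
    fix A assume A: "A \<in> sets G"
    then have "A \<in> sets M" using sM.subalg unfolding subalgebra_def by auto
    let ?Y = "\<lambda>x. indicator A x * nn_cond_exp (density M Z) G X x"
    have YG: "?Y \<in> borel_measurable G" using A by measurable
    then have YM: "?Y \<in> borel_measurable M" by (rule measurable_from_subalg[OF sM.subalg])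
    have "(\<integral>\<^sup>+ x\<in>A. nn_cond_exp M G Z x * nn_cond_exp (density M Z) G X x \<partial>M)
        = (\<integral>\<^sup>+ x. ?Y x * nn_cond_exp M G Z x \<partial>M)"
      by (rule nn_integral_cong) (simp add: mult_ac)
    also have "\<dots> = (\<integral>\<^sup>+ x. ?Y x * Z x \<partial>M)"
      by (rule sM.nn_cond_exp_intg[OF YG]) simp
    also have "\<dots> = (\<integral>\<^sup>+ x. ?Y x \<partial>density M Z)"
      using YM by (subst nn_integral_density) (auto simp: mult_ac)
    also have "\<dots> = (\<integral>\<^sup>+ x. indicator A x * X x \<partial>density M Z)"
      using A by (intro sQ.nn_cond_exp_intg) auto
    also have "\<dots> = (\<integral>\<^sup>+ x\<in>A. Z x * X x \<partial>M)"
      using \<open>A \<in> sets M\<close> by (subst nn_integral_density) (auto intro!: nn_integral_cong simp: mult_ac)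
    finally show "(\<integral>\<^sup>+ x\<in>A. Z x * X x \<partial>M)
        = (\<integral>\<^sup>+ x\<in>A. nn_cond_exp M G Z x * nn_cond_exp (density M Z) G X x \<partial>M)"
      by simp
  qed auto
  then show ?thesis by auto
qed

definition mixture_measure ::
  "'a measure \<Rightarrow> 'b set \<Rightarrow> ('b \<Rightarrow> ennreal) \<Rightarrow> ('b \<Rightarrow> 'a measure) \<Rightarrow> 'a measure" where
  "mixture_measure M K a Q = measure_of (space M) (sets M) (\<lambda>A. \<Sum>k\<in>K. a k * emeasure (Q k) A)"

lemma space_mixture_measure [simp]: "space (mixture_measure M K a Q) = space M"
  unfolding mixture_measure_def by simp

lemma sets_mixture_measure [simp, measurable_cong]: "sets (mixture_measure M K a Q) = sets M"
  unfolding mixture_measure_def by simp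

lemma emeasure_mixture_measure:
  assumes "\<And>k. k \<in> K \<Longrightarrow> sets (Q k) = sets M" and A: "A \<in> sets M"
  shows "emeasure (mixture_measure M K a Q) A = (\<Sum>k\<in>K. a k * emeasure (Q k) A)"
  unfolding mixture_measure_def
proof (rule emeasure_measure_of_sigma[OF sets.sigma_algebra_axioms _ _ A])
  show "positive (sets M) (\<lambda>A. \<Sum>k\<in>K. a k * emeasure (Q k) A)"
    unfolding positive_def by simp
  show "countably_additive (sets M) (\<lambda>A. \<Sum>k\<in>K. a k * emeasure (Q k) A)"
    unfolding countably_additive_def
  proof (intro allI impI)
    fix B :: "nat \<Rightarrow> _"
    assume B: "range B \<subseteq> sets M" "disjoint_family B"
    have "(\<Sum>n. \<Sum>k\<in>K. a k * emeasure (Q k) (B n)) = (\<Sum>k\<in>K. \<Sum>n. a k * emeasure (Q k) (B n))"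
      by (rule suminf_sum) (rule summableI)
    also have "\<dots> = (\<Sum>k\<in>K. a k * emeasure (Q k) (\<Union> (range B)))"
      using B assms(1) by (intro sum.cong refl) (simp add: ennreal_suminf_cmult suminf_emeasure)
    finally show "(\<Sum>n. \<Sum>k\<in>K. a k * emeasure (Q k) (B n)) = (\<Sum>k\<in>K. a k * emeasure (Q k) (\<Union> (range B)))" .
  qed
qed

lemma nn_integral_mixture_measure:
  assumes sets_Q: "\<And>k. k \<in> K \<Longrightarrow> sets (Q k) = sets M"
    and f: "f \<in> borel_measurable M"
  shows "(\<integral>\<^sup>+ x. f x \<partial>mixture_measure M K a Q) = (\<Sum>k\<in>K. a k * (\<integral>\<^sup>+ x. f x \<partial>Q k))"
proof (induction rule: borel_measurable_induct[OF f, case_names cong set mult add sup])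
  case (cong f g)
  have "(\<integral>\<^sup>+ x. f x \<partial>Q k) = (\<integral>\<^sup>+ x. g x \<partial>Q k)" if "k \<in> K" for k
    using cong(3) sets_eq_imp_space_eq[OF sets_Q[OF that]] by (intro nn_integral_cong) simp
  moreover have "(\<integral>\<^sup>+ x. f x \<partial>mixture_measure M K a Q) = (\<integral>\<^sup>+ x. g x \<partial>mixture_measure M K a Q)"
    using cong(3) by (intro nn_integral_cong) simp
  ultimately show ?case using cong(4) by simp
next
  case (set A)
  then show ?case using sets_Q by (simp add: emeasure_mixture_measure)
next
  case (mult u c)
  then have "u \<in> borel_measurable (Q k)" if "k \<in> K" for k
    using sets_Q[OF that] by (simp cong: measurable_cong_sets)
  with mult show ?case
    by (simp add: nn_integral_cmult sum_distrib_left mult.left_commute cong: sum.cong)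
next
  case (add u v)
  then have "u \<in> borel_measurable (Q k)" "v \<in> borel_measurable (Q k)" if "k \<in> K" for k
    using sets_Q[OF that] by (simp_all cong: measurable_cong_sets)
  with add show ?case
    by (simp add: nn_integral_add sum.distrib[symmetric] distrib_left cong: sum.cong)
next
  case (sup U)
  have UQ: "U i \<in> borel_measurable (Q k)" if "k \<in> K" for k i
    using sup(1)[of i] sets_Q[OF that] by (simp cong: measurable_cong_sets)
  have "(\<integral>\<^sup>+ x. (\<Squnion>i. U i x) \<partial>mixture_measure M K a Q)
      = (\<Squnion>i. \<Sum>k\<in>K. a k * (\<integral>\<^sup>+ x. U i x \<partial>Q k))"
    using sup by (simp add: nn_integral_monotone_convergence_SUP)
  also have "\<dots> = (\<Sum>k\<in>K. \<Squnion>i. a k * (\<integral>\<^sup>+ x. U i x \<partial>Q k))"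
    using \<open>incseq U\<close> unfolding incseq_def le_fun_def
    by (intro ennreal_SUP_sum) (auto simp: incseq_def intro!: mult_left_mono nn_integral_mono)
  also have "\<dots> = (\<Sum>k\<in>K. a k * (\<integral>\<^sup>+ x. (\<Squnion>i. U i x) \<partial>Q k))"
    using sup UQ by (simp add: nn_integral_monotone_convergence_SUP SUP_mult_left_ennreal)
  finally show ?case unfolding SUP_apply .
qed

lemma nn_integral_eq_on_subalgebra:
  assumes GM: "subalgebra M G" and GN: "subalgebra N G"
    and g: "g \<in> borel_measurable M" and h: "h \<in> borel_measurable N"
    and on_sets: "\<And>A. A \<in> sets G \<Longrightarrow>
      (\<integral>\<^sup>+ x. g x * indicator A x \<partial>M) = c * (\<integral>\<^sup>+ x. h x * indicator A x \<partial>N)"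
    and f: "f \<in> borel_measurable G"
  shows "(\<integral>\<^sup>+ x. g x * f x \<partial>M) = c * (\<integral>\<^sup>+ x. h x * f x \<partial>N)"
proof -
  have sub: "subalgebra (density M g) G" "subalgebra (density N h) G"
    using GM GN unfolding subalgebra_def by auto
  have fM: "f \<in> borel_measurable M" and fN: "f \<in> borel_measurable N"
    using measurable_from_subalg[OF GM f] measurable_from_subalg[OF GN f] .
  have f_restr: "f \<in> borel_measurable (restr_to_subalg (density N h) G)"
    using f sets_restr_to_subalg[OF sub(2)] by (simp cong: measurable_cong_sets)
  have eq: "restr_to_subalg (density M g) G = scale_measure c (restr_to_subalg (density N h) G)"
  proof (rule measure_eqI)
    show "sets (restr_to_subalg (density M g) G) = sets (scale_measure c (restr_to_subalg (density N h) G))"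
      using sub by (simp add: sets_restr_to_subalg)
    fix A assume "A \<in> sets (restr_to_subalg (density M g) G)"
    then have A: "A \<in> sets G" using sub by (simp add: sets_restr_to_subalg)
    then have "A \<in> sets M" "A \<in> sets N" using GM GN unfolding subalgebra_def by auto
    then show "emeasure (restr_to_subalg (density M g) G) A
        = emeasure (scale_measure c (restr_to_subalg (density N h) G)) A"
      using on_sets[OF A] A sub g h by (simp add: emeasure_restr_to_subalg emeasure_density)
  qed
  have "(\<integral>\<^sup>+ x. g x * f x \<partial>M) = (\<integral>\<^sup>+ x. f x \<partial>restr_to_subalg (density M g) G)"
    using g fM nn_integral_subalgebra2[OF sub(1) f] by (simp add: nn_integral_density)
  also have "\<dots> = c * (\<integral>\<^sup>+ x. f x \<partial>restr_to_subalg (density N h) G)"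
    unfolding eq using f_restr by (rule nn_integral_scale_measure)
  also have "\<dots> = c * (\<integral>\<^sup>+ x. h x * f x \<partial>N)"
    using h fN nn_integral_subalgebra2[OF sub(2) f] by (simp add: nn_integral_density)
  finally show ?thesis .
qed

locale exchange_market =
  fixes d :: nat and T :: real and F :: "real \<Rightarrow> 'a measure"
    and S :: "real \<Rightarrow> 'a \<Rightarrow> nat \<Rightarrow> nat \<Rightarrow> ennreal"
  assumes d_ge_1: "d \<ge> 1"
    and filtration: "filtration T F"
    and exchange_process: "exchange_process d T F S"
    and active_0: "\<forall>w\<in>space (F T). active d S 0 w = {1..d}"
begin

abbreviation "\<Omega> \<equiv> space (F T)"

lemmas filtration_facts =
  filtration[unfolded filtration_def, THEN conjunct1]
  filtration[unfolded filtration_def, THEN conjunct2, THEN conjunct1]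
  filtration[unfolded filtration_def, THEN conjunct2, THEN conjunct2, THEN conjunct1]
  filtration[unfolded filtration_def, THEN conjunct2, THEN conjunct2, THEN conjunct2, THEN conjunct2]

lemma zero_in_horizon: "0 \<in> {0..T}" and T_in_horizon: "T \<in> {0..T}"
  using filtration_facts(1) by auto

lemma space_F: "t \<in> {0..T} \<Longrightarrow> space (F t) = \<Omega>"
  using filtration_facts(2) by blast

lemma sets_F_mono: "0 \<le> s \<Longrightarrow> s \<le> t \<Longrightarrow> t \<le> T \<Longrightarrow> sets (F s) \<subseteq> sets (F t)"
  using filtration_facts(3) by blast

lemma sets_F_subset: "t \<in> {0..T} \<Longrightarrow> sets (F t) \<subseteq> sets (F T)"
  using sets_F_mono by auto

lemma S_measurable:
  "t \<in> {0..T} \<Longrightarrow> i \<in> {1..d} \<Longrightarrow> j \<in> {1..d} \<Longrightarrow> (\<lambda>w. S t w i j) \<in> borel_measurable (F t)"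
  using exchange_process[unfolded exchange_process_def, THEN conjunct1] by blast

lemma exch_matrix_S: "t \<in> {0..T} \<Longrightarrow> w \<in> \<Omega> \<Longrightarrow> exch_matrix d (S t w)"
  using exchange_process[unfolded exchange_process_def, THEN conjunct2, THEN conjunct2]
  unfolding exch_matrix_def by blast

lemma F_measurable_F_T:
  assumes t: "t \<in> {0..T}" and f: "f \<in> borel_measurable (F t)" shows "f \<in> borel_measurable (F T)"
  by (rule measurable_from_subalg[OF _ f]) (simp add: subalgebra_def space_F[OF t] sets_F_subset[OF t])

lemma row_sum_measurable:
  "t \<in> {0..T} \<Longrightarrow> i \<in> {1..d} \<Longrightarrow> (\<lambda>w. \<Sum>j\<in>{1..d}. S t w i j) \<in> borel_measurable (F t)"
  using S_measurable by (intro borel_measurable_sum) auto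

lemma basket_eq_price:
  assumes "t \<in> {0..T}" "w \<in> \<Omega>" "i \<in> {1..d}"
  shows "ennreal (basket d S i t w) = exch_matrix.price d (S t w) i"
proof -
  interpret exch_matrix d "S t w" using exch_matrix_S assms by auto
  have "row_sum d (S t w) i \<noteq> 0" using row_sum_ge_1[OF assms(3)] by auto
  then have "inverse (row_sum d (S t w) i) < \<top>" by (simp add: less_top[symmetric])
  then show ?thesis unfolding basket_def price_def row_sum_def by (simp add: ennreal_enn2real)
qed

lemma basket_measurable:
  "t \<in> {0..T} \<Longrightarrow> i \<in> {1..d} \<Longrightarrow> (\<lambda>w. basket d S i t w) \<in> borel_measurable (F t)"
  unfolding basket_def using row_sum_measurable
  by (intro borel_measurable_enn2real borel_measurable_inverse_ennreal)

lemma basket_nonneg: "basket d S i t w \<ge> 0"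
  unfolding basket_def by simp

lemma basket_le_1:
  "t \<in> {0..T} \<Longrightarrow> w \<in> \<Omega> \<Longrightarrow> i \<in> {1..d} \<Longrightarrow> ennreal (basket d S i t w) \<le> 1"
  using basket_eq_price exch_matrix.price_le_1[OF exch_matrix_S] by simp

lemma sum_basket: "t \<in> {0..T} \<Longrightarrow> w \<in> \<Omega> \<Longrightarrow> (\<Sum>i\<in>{1..d}. ennreal (basket d S i t w)) = 1"
  using basket_eq_price exch_matrix.sum_price[OF exch_matrix_S d_ge_1] by simp

lemma ennreal_basket_inactive:
  assumes "t \<in> {0..T}" "w \<in> \<Omega>" "i \<in> {1..d}" "i \<notin> active d S t w"
  shows "ennreal (basket d S i t w) = 0"
  using basket_eq_price[OF assms(1-3)] exch_matrix.price_inactive[OF exch_matrix_S[OF assms(1,2)] assms(3)]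
    assms(4) by (simp add: active_eq_active_set)

lemma S_mult_basket:
  assumes t: "t \<in> {0..T}" and w: "w \<in> \<Omega>" and i: "i \<in> {1..d}" and j: "j \<in> {1..d}"
  shows "S t w i j * ennreal (basket d S i t w)
    = indicator {w\<in>\<Omega>. S t w j i > 0} w * ennreal (basket d S j t w)"
  using exch_matrix.entry_mult_price[OF exch_matrix_S[OF t w] i j] w
  unfolding basket_eq_price[OF t w i] basket_eq_price[OF t w j]
  by (auto simp: indicator_def zero_less_iff_neq_zero)

lemma indicator_positive_entry_mult_basket:
  assumes t: "t \<in> {0..T}" and w: "w \<in> \<Omega>" and i: "i \<in> {1..d}" and j: "j \<in> {1..d}"
  shows "indicator {w\<in>\<Omega>. S t w j i > 0} w * ennreal (basket d S i t w) = ennreal (basket d S i t w)"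
  using exch_matrix.price_eq_0_of_zero_entry[OF exch_matrix_S[OF t w] i j] w
  unfolding basket_eq_price[OF t w i] by (auto simp: indicator_def zero_less_iff_neq_zero)

lemma sum_indicator_positive_entries:
  assumes w: "w \<in> \<Omega>" and i: "i \<in> active d S T w"
  shows "(\<Sum>j\<in>{1..d}. indicator {w\<in>\<Omega>. S T w i j > 0} w) = (of_nat (card (active d S T w)) :: ennreal)"
proof -
  have "(\<Sum>j\<in>{1..d}. indicator {w\<in>\<Omega>. S T w i j > 0} w) = (\<Sum>j\<in>{1..d}. of_bool (S T w i j \<noteq> 0) :: ennreal)"
    using w by (intro sum.cong) (auto simp: zero_less_iff_neq_zero)
  also have "\<dots> = of_nat (card (active d S T w))"
    using exch_matrix.card_active_set_eq_nonzero_entries[OF exch_matrix_S[OF T_in_horizon w]] i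
    unfolding active_eq_active_set by blast
  finally show ?thesis .
qed

lemma card_active_pos: "t \<in> {0..T} \<Longrightarrow> w \<in> \<Omega> \<Longrightarrow> card (active d S t w) \<noteq> 0"
  using exch_matrix.card_active_set_pos[OF exch_matrix_S d_ge_1] unfolding active_eq_active_set .

lemma F_0_measurable_const:
  fixes f :: "'a \<Rightarrow> 'b::t1_space"
  assumes f: "f \<in> borel_measurable (F 0)" and w: "w \<in> \<Omega>" "w' \<in> \<Omega>"
  shows "f w = f w'"
proof -
  have "f -` {f w} \<inter> \<Omega> \<in> sets (F 0)"
    using measurable_sets[OF f, of "{f w}"] space_F[OF zero_in_horizon] by simp
  then have "f -` {f w} \<inter> \<Omega> = \<Omega>" using filtration_facts(4) w by auto
  then have "w' \<in> f -` {f w}" using w(2) by blast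
  then show ?thesis by simp
qed

lemma active_set_S_0: "w \<in> \<Omega> \<Longrightarrow> active_set d (S 0 w) = {1..d}"
  using active_0 by (simp add: active_eq_active_set)

text \<open>Sbar(0) is deterministic since F(0) is trivial, so any sample point may be used.\<close>
definition basket0 :: "nat \<Rightarrow> real" where
  "basket0 i = basket d S i 0 (SOME w. w \<in> \<Omega>)"

lemma basket_0: "w \<in> \<Omega> \<Longrightarrow> i \<in> {1..d} \<Longrightarrow> basket d S i 0 w = basket0 i"
  unfolding basket0_def
  by (rule F_0_measurable_const[OF basket_measurable[OF zero_in_horizon]]) (auto intro: someI)

lemma basket0_pos:
  assumes w: "w \<in> \<Omega>" and i: "i \<in> {1..d}" shows "basket0 i > 0"
proof -
  interpret exch_matrix d "S 0 w" using exch_matrix_S zero_in_horizon w by auto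
  have "i \<in> active_set d (S 0 w)" using active_set_S_0 w i by auto
  then have "price i \<noteq> 0" by (rule price_active)
  then show ?thesis
    using basket_eq_price[OF zero_in_horizon w i] basket_0[OF w i] basket_nonneg[of i 0 w]
    by (auto simp: order_less_le)
qed

lemma S_0_mult_basket0:
  assumes w: "w \<in> \<Omega>" and i: "i \<in> {1..d}" and j: "j \<in> {1..d}"
  shows "S 0 w i j * ennreal (basket0 i) = ennreal (basket0 j)"
proof -
  interpret exch_matrix d "S 0 w" using exch_matrix_S zero_in_horizon w by auto
  have "i \<in> active_set d (S 0 w)" using active_set_S_0 w i by auto
  then have "S 0 w j i \<noteq> 0" using entry_to_active_nonzero j by auto
  then show ?thesis
    using entry_mult_price[OF i j] basket_eq_price[OF zero_in_horizon w] basket_0[OF w] i j by simp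
qed

lemma S_0_finite:
  assumes w: "w \<in> \<Omega>" and i: "i \<in> {1..d}" and j: "j \<in> {1..d}" shows "S 0 w i j < \<top>"
proof -
  interpret exch_matrix d "S 0 w" using exch_matrix_S zero_in_horizon w by auto
  show ?thesis using active_entry_finite active_set_S_0 w i j by auto
qed

lemma ennreal_basket0_inverse:
  "w \<in> \<Omega> \<Longrightarrow> i \<in> {1..d} \<Longrightarrow> ennreal (basket0 i) * ennreal (1 / basket0 i) = 1"
  using basket0_pos[of w i] by (simp add: ennreal_mult[symmetric])

lemma prob_on_space: "prob_on T F M \<Longrightarrow> space M = \<Omega>"
  unfolding prob_on_def by auto

lemma prob_on_sets: "prob_on T F M \<Longrightarrow> sets M = sets (F T)"
  unfolding prob_on_def by auto

lemma prob_on_ex: "prob_on T F M \<Longrightarrow> \<exists>w. w \<in> \<Omega>"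
  unfolding prob_on_def using prob_space.not_empty by fastforce

lemma prob_on_AE_ex:
  assumes M: "prob_on T F M" and P: "AE w in M. P w" shows "\<exists>w\<in>\<Omega>. P w"
proof (rule ccontr)
  interpret prob_space M using M unfolding prob_on_def by auto
  assume none: "\<not> (\<exists>w\<in>\<Omega>. P w)"
  have "AE w in M. False" using P AE_space
  proof eventually_elim
    case (elim w)
    then show False using none prob_on_space[OF M] by auto
  qed
  then show False by simp
qed

lemma prob_on_subalgebra:
  assumes M: "prob_on T F M" and t: "t \<in> {0..T}" shows "sigma_finite_subalgebra M (F t)"
proof -
  interpret prob_space M using M unfolding prob_on_def by auto
  have "subalgebra M (F t)"
    unfolding subalgebra_def using M space_F[OF t] sets_F_subset[OF t] unfolding prob_on_def by auto
  then have "finite_measure_subalgebra M (F t)"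
    unfolding finite_measure_subalgebra_def finite_measure_subalgebra_axioms_def
    using finite_measure_axioms by auto
  then show ?thesis using finite_measure_subalgebra_is_sigma_finite by auto
qed

lemma prob_on_measurable:
  assumes "prob_on T F M" "t \<in> {0..T}" "f \<in> borel_measurable (F t)"
  shows "f \<in> borel_measurable M"
proof -
  interpret sigma_finite_subalgebra M "F t" using prob_on_subalgebra assms(1,2) by auto
  show ?thesis by (rule measurable_from_subalg[OF subalg assms(3)])
qed

lemma ennreal_basket_measurable:
  "prob_on T F M \<Longrightarrow> t \<in> {0..T} \<Longrightarrow> i \<in> {1..d} \<Longrightarrow>
    (\<lambda>w. ennreal (basket d S i t w)) \<in> borel_measurable M"
  using prob_on_measurable[OF _ _ basket_measurable] by (intro measurable_compose[OF _ measurable_ennreal])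

lemma nn_cond_exp_F_0:
  assumes M: "prob_on T F M" and f: "f \<in> borel_measurable M" and w: "w \<in> \<Omega>"
  shows "nn_cond_exp M (F 0) f w = (\<integral>\<^sup>+ x. f x \<partial>M)"
proof -
  interpret sigma_finite_subalgebra M "F 0" using prob_on_subalgebra M zero_in_horizon by auto
  interpret prob_space M using M unfolding prob_on_def by auto
  have "(\<integral>\<^sup>+ x. f x \<partial>M) = (\<integral>\<^sup>+ x. 1 * nn_cond_exp M (F 0) f x \<partial>M)"
    using nn_cond_exp_intg[of "\<lambda>_. 1" f] f by simp
  also have "\<dots> = (\<integral>\<^sup>+ x. nn_cond_exp M (F 0) f w \<partial>M)"
    using F_0_measurable_const[OF borel_measurable_nn_cond_exp _ w] prob_on_space[OF M]
    by (intro nn_integral_cong) auto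
  also have "\<dots> = nn_cond_exp M (F 0) f w" using emeasure_space_1 by simp
  finally show ?thesis by simp
qed

lemma valuation_measure_nn_cond_exp:
  assumes V: "valuation_measure d T F S Qb" and i: "i \<in> {1..d}"
    and st: "0 \<le> s" "s \<le> t" "t \<le> T"
  shows "AE w in Qb. nn_cond_exp Qb (F s) (\<lambda>w. ennreal (basket d S i t w)) w = ennreal (basket d S i s w)"
proof -
  have Qb: "prob_on T F Qb" using V unfolding valuation_measure_def by auto
  have s: "s \<in> {0..T}" and t: "t \<in> {0..T}" using st by auto
  interpret sigma_finite_subalgebra Qb "F s" using prob_on_subalgebra Qb s by auto
  interpret prob_space Qb using Qb unfolding prob_on_def by auto
  let ?E = "nn_cond_exp Qb (F s) (\<lambda>w. ennreal (basket d S i t w))"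
  have real_eq: "AE w in Qb. real_cond_exp Qb (F s) (basket d S i t) w = basket d S i s w"
    using V i st unfolding valuation_measure_def by blast
  have real_nn: "AE w in Qb. real_cond_exp Qb (F s) (basket d S i t) w = enn2real (?E w)"
    using real_cond_exp_nonneg_eq[OF prob_on_measurable[OF Qb t basket_measurable[OF t i]] basket_nonneg]
    by simp
  have "(\<integral>\<^sup>+ w. ?E w \<partial>Qb) = (\<integral>\<^sup>+ w. ennreal (basket d S i t w) \<partial>Qb)"
    using nn_cond_exp_intg[of "\<lambda>_. 1"] ennreal_basket_measurable[OF Qb t i] by simp
  also have "\<dots> \<le> (\<integral>\<^sup>+ w. 1 \<partial>Qb)"
    using basket_le_1[OF t _ i] prob_on_space[OF Qb] by (intro nn_integral_mono) auto
  finally have "(\<integral>\<^sup>+ w. ?E w \<partial>Qb) \<noteq> \<infinity>" using emeasure_space_1 by (auto simp: top_unique)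
  then have "AE w in Qb. ?E w \<noteq> \<infinity>" by (intro nn_integral_PInf_AE) auto
  with real_eq real_nn show ?thesis
  proof eventually_elim
    case (elim w)
    have "?E w = ennreal (enn2real (?E w))" using elim(3) by (simp add: less_top)
    also have "\<dots> = ennreal (basket d S i s w)" using elim(1,2) by simp
    finally show ?case .
  qed
qed

lemma valuation_measure_tower:
  assumes V: "valuation_measure d T F S Qb" and i: "i \<in> {1..d}"
    and t: "t \<in> {0..T}" and g: "g \<in> borel_measurable (F t)"
  shows "(\<integral>\<^sup>+ w. g w * ennreal (basket d S i T w) \<partial>Qb) = (\<integral>\<^sup>+ w. g w * ennreal (basket d S i t w) \<partial>Qb)"
proof -
  have Qb: "prob_on T F Qb" using V unfolding valuation_measure_def by auto
  interpret sigma_finite_subalgebra Qb "F t" using prob_on_subalgebra Qb t by auto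
  have "(\<integral>\<^sup>+ w. g w * ennreal (basket d S i T w) \<partial>Qb)
     = (\<integral>\<^sup>+ w. g w * nn_cond_exp Qb (F t) (\<lambda>w. ennreal (basket d S i T w)) w \<partial>Qb)"
    using g ennreal_basket_measurable[OF Qb T_in_horizon i] by (intro nn_cond_exp_intg[symmetric])
  also have "\<dots> = (\<integral>\<^sup>+ w. g w * ennreal (basket d S i t w) \<partial>Qb)"
    using valuation_measure_nn_cond_exp[OF V i, of t T] t
    by (intro nn_integral_cong_AE) (auto elim!: eventually_mono)
  finally show ?thesis .
qed

lemma valuation_measureI:
  assumes Qb: "prob_on T F Qb"
    and mart: "\<And>i s t. i \<in> {1..d} \<Longrightarrow> 0 \<le> s \<Longrightarrow> s \<le> t \<Longrightarrow> t \<le> T \<Longrightarrow>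
      AE w in Qb. nn_cond_exp Qb (F s) (\<lambda>w. ennreal (basket d S i t w)) w = ennreal (basket d S i s w)"
  shows "valuation_measure d T F S Qb"
  unfolding valuation_measure_def
proof (intro conjI Qb ballI allI impI)
  fix i s t assume i: "i \<in> {1..d}" and st: "0 \<le> s \<and> s \<le> t \<and> t \<le> T"
  then have s: "s \<in> {0..T}" and t: "t \<in> {0..T}" by auto
  interpret sigma_finite_subalgebra Qb "F s" using prob_on_subalgebra Qb s by auto
  have "AE w in Qb. nn_cond_exp Qb (F s) (\<lambda>w. ennreal (basket d S i t w)) w = ennreal (basket d S i s w)"
    using mart[OF i] st by auto
  then show "AE w in Qb. real_cond_exp Qb (F s) (basket d S i t) w = basket d S i s w"
    using real_cond_exp_nonneg_eq[OF prob_on_measurable[OF Qb t basket_measurable[OF t i]] basket_nonneg]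
    by eventually_elim (simp add: basket_nonneg)
qed

lemma numeraire_consistent_prob_on:
  "numeraire_consistent d T F S Q \<Longrightarrow> i \<in> {1..d} \<Longrightarrow> prob_on T F (Q i)"
  unfolding numeraire_consistent_def by blast

lemma numeraire_consistentD:
  assumes "numeraire_consistent d T F S Q" "i \<in> {1..d}" "j \<in> {1..d}" "t \<in> {0..T}"
    "A \<in> sets (F t)" "w0 \<in> \<Omega>"
  shows "(\<integral>\<^sup>+ w. S t w i j * indicator A w \<partial>Q i)
    = S 0 w0 i j * emeasure (Q j) (A \<inter> {w\<in>\<Omega>. S t w j i > 0})"
  using assms unfolding numeraire_consistent_def by blast

lemma positive_entry_set_measurable:
  assumes t: "t \<in> {0..T}" and i: "i \<in> {1..d}" and j: "j \<in> {1..d}"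
  shows "{w\<in>\<Omega>. S t w i j > 0} \<in> sets (F t)"
proof -
  have "{w\<in>space (F t). S t w i j > 0} \<in> sets (F t)" using S_measurable[OF t i j] by measurable
  then show ?thesis by (simp only: space_F[OF t])
qed

lemma numeraire_consistent_nn_integral:
  assumes NC: "numeraire_consistent d T F S Q" and i: "i \<in> {1..d}" and j: "j \<in> {1..d}"
    and t: "t \<in> {0..T}" and w0: "w0 \<in> \<Omega>" and f: "f \<in> borel_measurable (F t)"
  shows "(\<integral>\<^sup>+ w. S t w i j * f w \<partial>Q i) =
    S 0 w0 i j * (\<integral>\<^sup>+ w. indicator {w\<in>\<Omega>. S t w j i > 0} w * f w \<partial>Q j)"
proof (rule nn_integral_eq_on_subalgebra[OF _ _ _ _ _ f])
  let ?B = "{w\<in>\<Omega>. S t w j i > 0}"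
  have Qi: "prob_on T F (Q i)" and Qj: "prob_on T F (Q j)"
    using numeraire_consistent_prob_on[OF NC] i j by auto
  show "subalgebra (Q i) (F t)" "subalgebra (Q j) (F t)"
    using sigma_finite_subalgebra.subalg prob_on_subalgebra[OF Qi t] prob_on_subalgebra[OF Qj t]
    by blast+
  show "(\<lambda>w. S t w i j) \<in> borel_measurable (Q i)" using prob_on_measurable[OF Qi t S_measurable[OF t i j]] .
  have B: "?B \<in> sets (F t)" using positive_entry_set_measurable[OF t j i] .
  then show "indicator ?B \<in> borel_measurable (Q j)"
    by (intro prob_on_measurable[OF Qj t] borel_measurable_indicator)
  fix A assume A: "A \<in> sets (F t)"
  have "A \<inter> ?B \<in> sets (Q j)" using A B sets_F_subset[OF t] prob_on_sets[OF Qj] by auto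
  then show "(\<integral>\<^sup>+ w. S t w i j * indicator A w \<partial>Q i) = S 0 w0 i j * (\<integral>\<^sup>+ w. indicator ?B w * indicator A w \<partial>Q j)"
    using numeraire_consistentD[OF NC i j t A w0]
    by (simp add: indicator_inter_arith[symmetric] Int_commute)
qed

text \<open>Under Q_i currency i is active almost surely: on the event where some S_ik is infinite,
  numeraire consistency would give the finite number S_ik(0) Q_k(...) for an infinite integral.\<close>
lemma numeraire_consistent_AE_active:
  assumes NC: "numeraire_consistent d T F S Q" and i: "i \<in> {1..d}" and t: "t \<in> {0..T}"
  shows "AE w in Q i. i \<in> active_set d (S t w)"
proof -
  have Qi: "prob_on T F (Q i)" using numeraire_consistent_prob_on[OF NC i] .
  obtain w0 where w0: "w0 \<in> \<Omega>" using prob_on_ex[OF Qi] by auto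
  have "AE w in Q i. S t w i k \<noteq> \<top>" if k: "k \<in> {1..d}" for k
  proof -
    let ?A = "{w\<in>\<Omega>. S t w i k = \<top>}"
    have "{w\<in>space (F t). S t w i k = \<top>} \<in> sets (F t)" using S_measurable[OF t i k] by measurable
    then have A: "?A \<in> sets (F t)" by (simp only: space_F[OF t])
    then have AQ: "?A \<in> sets (Q i)" using sets_F_subset[OF t] prob_on_sets[OF Qi] by auto
    interpret Qk: prob_space "Q k" using numeraire_consistent_prob_on[OF NC k] unfolding prob_on_def by auto
    have "\<top> * emeasure (Q i) ?A = (\<integral>\<^sup>+ w. S t w i k * indicator ?A w \<partial>Q i)"
      using AQ by (subst nn_integral_cong[where v="\<lambda>w. \<top> * indicator ?A w"])
        (auto split: split_indicator simp: nn_integral_cmult)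
    also have "\<dots> = S 0 w0 i k * emeasure (Q k) (?A \<inter> {w\<in>\<Omega>. S t w k i > 0})"
      using numeraire_consistentD[OF NC i k t A w0] .
    also have "\<dots> < \<top>" using S_0_finite[OF w0 i k]
      by (simp add: ennreal_mult_eq_top_iff Qk.emeasure_finite less_top[symmetric])
    finally have "?A \<in> null_sets (Q i)" using AQ by (auto simp: ennreal_top_mult split: if_splits)
    then show ?thesis by (rule AE_I') (use prob_on_space[OF Qi] in auto)
  qed
  then have "AE w in Q i. \<forall>k\<in>{1..d}. S t w i k \<noteq> \<top>" by (subst AE_finite_all) auto
  then show ?thesis
    by (rule eventually_mono) (use i in \<open>auto simp: active_set_def row_sum_def ennreal_sum_less_top less_top\<close>)
qed

lemma numeraire_consistent_basket_symmetric:
  assumes NC: "numeraire_consistent d T F S Q" and i: "i \<in> {1..d}" and j: "j \<in> {1..d}"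
    and t: "t \<in> {0..T}" and g: "g \<in> borel_measurable (F t)"
  shows "ennreal (basket0 i) * (\<integral>\<^sup>+ w. g w * ennreal (basket d S j t w) \<partial>Q i)
       = ennreal (basket0 j) * (\<integral>\<^sup>+ w. g w * ennreal (basket d S i t w) \<partial>Q j)"
proof -
  let ?B = "{w\<in>\<Omega>. S t w j i > 0}"
  have Qi: "prob_on T F (Q i)" and Qj: "prob_on T F (Q j)"
    using numeraire_consistent_prob_on[OF NC] i j by auto
  obtain w0 where w0: "w0 \<in> \<Omega>" using prob_on_ex[OF Qi] by auto
  have "(\<integral>\<^sup>+ w. g w * ennreal (basket d S j t w) \<partial>Q i)
      = (\<integral>\<^sup>+ w. S t w i j * (g w * ennreal (basket d S i t w)) \<partial>Q i)"
  proof (rule nn_integral_cong_AE)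
    show "AE w in Q i. g w * ennreal (basket d S j t w) = S t w i j * (g w * ennreal (basket d S i t w))"
      using numeraire_consistent_AE_active[OF NC i t] AE_space
    proof eventually_elim
      case (elim w)
      then have w: "w \<in> \<Omega>" using prob_on_space[OF Qi] by simp
      have "S t w j i > 0"
        using exch_matrix.entry_to_active_nonzero[OF exch_matrix_S[OF t w] elim(1) j]
        by (simp add: zero_less_iff_neq_zero)
      then show ?case using S_mult_basket[OF t w i j] w by (simp add: mult.left_commute)
    qed
  qed
  also have "\<dots> = S 0 w0 i j * (\<integral>\<^sup>+ w. indicator ?B w * (g w * ennreal (basket d S i t w)) \<partial>Q j)"
    by (intro numeraire_consistent_nn_integral[OF NC i j t w0] borel_measurable_times_ennreal[OF g]
        measurable_compose[OF basket_measurable[OF t i] measurable_ennreal])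
  also have "(\<integral>\<^sup>+ w. indicator ?B w * (g w * ennreal (basket d S i t w)) \<partial>Q j)
      = (\<integral>\<^sup>+ w. g w * ennreal (basket d S i t w) \<partial>Q j)"
    using indicator_positive_entry_mult_basket[OF t _ i j] prob_on_space[OF Qj]
    by (intro nn_integral_cong) (simp add: mult.left_commute)
  finally have "ennreal (basket0 i) * (\<integral>\<^sup>+ w. g w * ennreal (basket d S j t w) \<partial>Q i)
      = (S 0 w0 i j * ennreal (basket0 i)) * (\<integral>\<^sup>+ w. g w * ennreal (basket d S i t w) \<partial>Q j)"
    by (simp add: mult_ac)
  then show ?thesis using S_0_mult_basket0[OF w0 i j] by simp
qed

section \<open>Change of numeraire\<close>

text \<open>dQ_i/dQb = Sbar_i(T)/Sbar_i(0): Q_i arises from Qb by changing the numeraire from the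
  basket to currency i.\<close>
definition basket_density :: "nat \<Rightarrow> 'a \<Rightarrow> ennreal" where
  "basket_density i w = ennreal (1 / basket0 i) * ennreal (basket d S i T w)"

definition change_of_numeraire :: "(nat \<Rightarrow> 'a measure) \<Rightarrow> 'a measure \<Rightarrow> bool" where
  "change_of_numeraire Q Qb \<longleftrightarrow> (\<forall>i\<in>{1..d}. \<forall>A\<in>sets (F T).
     ennreal (basket0 i) * emeasure (Q i) A = (\<integral>\<^sup>+ w. ennreal (basket d S i T w) * indicator A w \<partial>Qb))"

lemma basket_density_measurable:
  "prob_on T F M \<Longrightarrow> i \<in> {1..d} \<Longrightarrow> basket_density i \<in> borel_measurable M"
  unfolding basket_density_def[abs_def] using ennreal_basket_measurable[OF _ T_in_horizon]
  by (intro borel_measurable_times_ennreal) auto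

lemma basket_eq_basket_density:
  "i \<in> {1..d} \<Longrightarrow> w0 \<in> \<Omega> \<Longrightarrow> ennreal (basket d S i T w) = ennreal (basket0 i) * basket_density i w"
  unfolding basket_density_def using ennreal_basket0_inverse by (simp add: mult.assoc[symmetric])

lemma nn_integral_basket_density:
  assumes Qb: "prob_on T F Qb" and i: "i \<in> {1..d}" and g: "g \<in> borel_measurable Qb"
  shows "(\<integral>\<^sup>+ w. g w \<partial>density Qb (basket_density i))
    = ennreal (1 / basket0 i) * (\<integral>\<^sup>+ w. g w * ennreal (basket d S i T w) \<partial>Qb)"
proof -
  have "(\<integral>\<^sup>+ w. g w \<partial>density Qb (basket_density i))
      = (\<integral>\<^sup>+ w. ennreal (1 / basket0 i) * (g w * ennreal (basket d S i T w)) \<partial>Qb)"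
    using g basket_density_measurable[OF Qb i] by (simp add: nn_integral_density basket_density_def mult_ac)
  also have "\<dots> = ennreal (1 / basket0 i) * (\<integral>\<^sup>+ w. g w * ennreal (basket d S i T w) \<partial>Qb)"
    using g ennreal_basket_measurable[OF Qb T_in_horizon i]
    by (intro nn_integral_cmult borel_measurable_times_ennreal)
  finally show ?thesis .
qed

lemma change_of_numeraire_densities:
  assumes Qb: "prob_on T F Qb"
  shows "change_of_numeraire (\<lambda>i. density Qb (basket_density i)) Qb"
  unfolding change_of_numeraire_def
proof (intro ballI)
  fix i A assume i: "i \<in> {1..d}" and A: "A \<in> sets (F T)"
  obtain w0 where w0: "w0 \<in> \<Omega>" using prob_on_ex[OF Qb] by auto
  have AQ: "A \<in> sets Qb" using A prob_on_sets[OF Qb] by simp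
  have Z: "basket_density i \<in> borel_measurable Qb" using basket_density_measurable[OF Qb i] .
  have "ennreal (basket0 i) * emeasure (density Qb (basket_density i)) A
      = ennreal (basket0 i) * (\<integral>\<^sup>+ w. basket_density i w * indicator A w \<partial>Qb)"
    using AQ Z by (simp add: emeasure_density)
  also have "\<dots> = (\<integral>\<^sup>+ w. ennreal (basket0 i) * (basket_density i w * indicator A w) \<partial>Qb)"
    using AQ Z by (intro nn_integral_cmult[symmetric]) simp
  also have "\<dots> = (\<integral>\<^sup>+ w. ennreal (basket d S i T w) * indicator A w \<partial>Qb)"
    using basket_eq_basket_density[OF i w0] by (intro nn_integral_cong) (simp add: mult.assoc)
  finally show "ennreal (basket0 i) * emeasure (density Qb (basket_density i)) A
      = (\<integral>\<^sup>+ w. ennreal (basket d S i T w) * indicator A w \<partial>Qb)" .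
qed

lemma change_of_numeraire_eq_density:
  assumes Qb: "prob_on T F Qb" and Qi: "prob_on T F (Q i)" and CN: "change_of_numeraire Q Qb"
    and i: "i \<in> {1..d}"
  shows "Q i = density Qb (basket_density i)"
proof (rule measure_eqI)
  show "sets (Q i) = sets (density Qb (basket_density i))"
    using prob_on_sets[OF Qi] prob_on_sets[OF Qb] by simp
  fix A assume "A \<in> sets (Q i)"
  then have A: "A \<in> sets (F T)" using prob_on_sets[OF Qi] by simp
  obtain w0 where w0: "w0 \<in> \<Omega>" using prob_on_ex[OF Qb] by auto
  have "ennreal (basket0 i) * emeasure (Q i) A
      = ennreal (basket0 i) * emeasure (density Qb (basket_density i)) A"
    using CN change_of_numeraire_densities[OF Qb] A i unfolding change_of_numeraire_def by simp
  then show "emeasure (Q i) A = emeasure (density Qb (basket_density i)) A"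
    using basket0_pos[OF w0 i] by (simp add: ennreal_mult_cancel_left)
qed

lemma emeasure_change_of_numeraire:
  assumes Qb: "prob_on T F Qb" and CN: "change_of_numeraire Q Qb" and A: "A \<in> sets (F T)"
  shows "emeasure Qb A = (\<Sum>i\<in>{1..d}. ennreal (basket0 i) * emeasure (Q i) A)"
proof -
  have AQ: "A \<in> sets Qb" using A prob_on_sets[OF Qb] by simp
  have "(\<Sum>i\<in>{1..d}. ennreal (basket0 i) * emeasure (Q i) A)
      = (\<Sum>i\<in>{1..d}. \<integral>\<^sup>+ w. ennreal (basket d S i T w) * indicator A w \<partial>Qb)"
    using CN A unfolding change_of_numeraire_def by simp
  also have "\<dots> = (\<integral>\<^sup>+ w. (\<Sum>i\<in>{1..d}. ennreal (basket d S i T w) * indicator A w) \<partial>Qb)"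
    using ennreal_basket_measurable[OF Qb T_in_horizon] AQ by (intro nn_integral_sum[symmetric]) auto
  also have "\<dots> = (\<integral>\<^sup>+ w. (\<Sum>i\<in>{1..d}. ennreal (basket d S i T w)) * indicator A w \<partial>Qb)"
    by (simp only: sum_distrib_right)
  also have "\<dots> = (\<integral>\<^sup>+ w. indicator A w \<partial>Qb)"
    using sum_basket[OF T_in_horizon] prob_on_space[OF Qb] by (intro nn_integral_cong) simp
  also have "\<dots> = emeasure Qb A" using AQ by simp
  finally show ?thesis by simp
qed

lemma change_of_numeraire_equiv_sum:
  assumes Qb: "prob_on T F Qb" and CN: "change_of_numeraire Q Qb"
  shows "equiv_sum d T F Q Qb"
  unfolding equiv_sum_def
proof
  fix A assume A: "A \<in> sets (F T)"
  obtain w0 where w0: "w0 \<in> \<Omega>" using prob_on_ex[OF Qb] by auto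
  have "ennreal (basket0 i) \<noteq> 0" if "i \<in> {1..d}" for i using basket0_pos[OF w0 that] by simp
  then show "(emeasure Qb A = 0) = (\<forall>i\<in>{1..d}. emeasure (Q i) A = 0)"
    unfolding emeasure_change_of_numeraire[OF Qb CN A] by simp
qed

lemma prob_on_basket_density:
  assumes V: "valuation_measure d T F S Qb" and i: "i \<in> {1..d}"
  shows "prob_on T F (density Qb (basket_density i))"
proof -
  have Qb: "prob_on T F Qb" using V unfolding valuation_measure_def by auto
  interpret prob_space Qb using Qb unfolding prob_on_def by auto
  obtain w0 where w0: "w0 \<in> \<Omega>" using prob_on_ex[OF Qb] by auto
  have "ennreal (basket0 i) * emeasure (density Qb (basket_density i)) \<Omega>
      = (\<integral>\<^sup>+ w. 1 * ennreal (basket d S i T w) \<partial>Qb)"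
    using change_of_numeraire_densities[OF Qb] i prob_on_space[OF Qb]
    unfolding change_of_numeraire_def by (auto intro!: nn_integral_cong)
  also have "\<dots> = (\<integral>\<^sup>+ w. 1 * ennreal (basket d S i 0 w) \<partial>Qb)"
    by (rule valuation_measure_tower[OF V i zero_in_horizon]) simp
  also have "\<dots> = (\<integral>\<^sup>+ w. ennreal (basket0 i) \<partial>Qb)"
    using basket_0[OF _ i] prob_on_space[OF Qb] by (intro nn_integral_cong) simp
  also have "\<dots> = ennreal (basket0 i) * 1" using emeasure_space_1 by simp
  finally have "emeasure (density Qb (basket_density i)) (space (density Qb (basket_density i))) = 1"
    using basket0_pos[OF w0 i] prob_on_space[OF Qb]
    by (subst (asm) ennreal_mult_cancel_left) auto
  then have "prob_space (density Qb (basket_density i))" by (rule prob_spaceI)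
  then show ?thesis using Qb unfolding prob_on_def by simp
qed

lemma numeraire_consistent_basket_densities:
  assumes V: "valuation_measure d T F S Qb"
  shows "numeraire_consistent d T F S (\<lambda>i. density Qb (basket_density i))"
  unfolding numeraire_consistent_def
proof (intro conjI ballI)
  fix i assume "i \<in> {1..d}"
  then show "prob_on T F (density Qb (basket_density i))" by (rule prob_on_basket_density[OF V])
next
  have Qb: "prob_on T F Qb" using V unfolding valuation_measure_def by auto
  fix i j t A w0
  assume i: "i \<in> {1..d}" and j: "j \<in> {1..d}" and t: "t \<in> {0..T}" and A: "A \<in> sets (F t)"
    and w0: "w0 \<in> \<Omega>"
  let ?B = "{w\<in>\<Omega>. S t w j i > 0}"
  let ?g = "\<lambda>w. S t w i j * indicator A w"
  let ?m = "emeasure (density Qb (basket_density j)) (A \<inter> ?B)"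
  have AB: "A \<inter> ?B \<in> sets (F t)" using A positive_entry_set_measurable[OF t j i] by auto
  have g: "?g \<in> borel_measurable (F t)"
    using S_measurable[OF t i j] A by (intro borel_measurable_times_ennreal) auto
  have "(\<integral>\<^sup>+ w. ?g w \<partial>density Qb (basket_density i))
      = ennreal (1 / basket0 i) * (\<integral>\<^sup>+ w. ?g w * ennreal (basket d S i T w) \<partial>Qb)"
    using nn_integral_basket_density[OF Qb i prob_on_measurable[OF Qb t g]] .
  also have "(\<integral>\<^sup>+ w. ?g w * ennreal (basket d S i T w) \<partial>Qb) = (\<integral>\<^sup>+ w. ?g w * ennreal (basket d S i t w) \<partial>Qb)"
    using valuation_measure_tower[OF V i t g] .
  also have "\<dots> = (\<integral>\<^sup>+ w. indicator (A \<inter> ?B) w * ennreal (basket d S j t w) \<partial>Qb)"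
  proof (rule nn_integral_cong)
    fix w assume "w \<in> space Qb"
    then have w: "w \<in> \<Omega>" using prob_on_space[OF Qb] by simp
    have "?g w * ennreal (basket d S i t w) = indicator A w * (S t w i j * ennreal (basket d S i t w))"
      by (simp only: ac_simps)
    also have "\<dots> = indicator A w * (indicator ?B w * ennreal (basket d S j t w))"
      by (simp only: S_mult_basket[OF t w i j])
    finally show "?g w * ennreal (basket d S i t w) = indicator (A \<inter> ?B) w * ennreal (basket d S j t w)"
      by (simp add: indicator_inter_arith mult.assoc)
  qed
  also have "\<dots> = (\<integral>\<^sup>+ w. indicator (A \<inter> ?B) w * ennreal (basket d S j T w) \<partial>Qb)"
    using valuation_measure_tower[OF V j t, of "indicator (A \<inter> ?B)"] AB by simp
  also have "\<dots> = ennreal (basket0 j) * ?m"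
    using change_of_numeraire_densities[OF Qb] j AB sets_F_subset[OF t]
    unfolding change_of_numeraire_def by (auto simp: mult.commute)
  also have "ennreal (1 / basket0 i) * (ennreal (basket0 j) * ?m)
      = S 0 w0 i j * ((ennreal (basket0 i) * ennreal (1 / basket0 i)) * ?m)"
    by (simp only: S_0_mult_basket0[OF w0 i j, symmetric] ac_simps)
  also have "\<dots> = S 0 w0 i j * ?m" using ennreal_basket0_inverse[OF w0 i] by simp
  finally show "(\<integral>\<^sup>+ w. ?g w \<partial>density Qb (basket_density i)) = S 0 w0 i j * ?m" .
qed

lemma nn_cond_exp_change_of_numeraire:
  assumes V: "valuation_measure d T F S Qb" and i: "i \<in> {1..d}"
    and Q_eq: "Q i = density Qb (basket_density i)" and r: "r \<in> {0..T}"
    and X: "X \<in> borel_measurable Qb"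
  shows "AE w in Qb. nn_cond_exp Qb (F r) (\<lambda>x. ennreal (basket d S i T x) * X x) w
       = ennreal (basket d S i r w) * nn_cond_exp (Q i) (F r) X w"
proof -
  have Qb: "prob_on T F Qb" using V unfolding valuation_measure_def by auto
  obtain w0 where w0: "w0 \<in> \<Omega>" using prob_on_ex[OF Qb] by auto
  interpret sigma_finite_subalgebra Qb "F r" using prob_on_subalgebra[OF Qb r] .
  let ?c = "ennreal (basket0 i)" and ?Z = "basket_density i"
  have Z: "?Z \<in> borel_measurable Qb" using basket_density_measurable[OF Qb i] .
  have ZX: "(\<lambda>x. ?Z x * X x) \<in> borel_measurable Qb" using Z X by (rule borel_measurable_times_ennreal)
  have bayes: "AE x in Qb. nn_cond_exp Qb (F r) (\<lambda>x. ?Z x * X x) x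
     = nn_cond_exp Qb (F r) ?Z x * nn_cond_exp (Q i) (F r) X x"
    using nn_cond_exp_density[OF prob_on_subalgebra[OF Qb r] _ Z X]
      prob_on_subalgebra[OF prob_on_basket_density[OF V i] r] Q_eq
    by simp
  have BX: "(\<lambda>x. ennreal (basket d S i T x) * X x) = (\<lambda>x. ?c * (?Z x * X x))"
    and B: "(\<lambda>x. ennreal (basket d S i T x)) = (\<lambda>x. ?c * ?Z x)"
    using basket_eq_basket_density[OF i w0] by (simp_all add: mult.assoc)
  have mart: "AE x in Qb. nn_cond_exp Qb (F r) (\<lambda>x. ?c * ?Z x) x = ennreal (basket d S i r x)"
    using valuation_measure_nn_cond_exp[OF V i, of r T] r unfolding B by auto
  show ?thesis
    using bayes nn_cond_exp_cmult[OF ZX, where c="?c"] nn_cond_exp_cmult[OF Z, where c="?c"] mart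
    unfolding BX by eventually_elim (simp add: mult.assoc)
qed

lemma card_active_measurable:
  assumes t: "t \<in> {0..T}"
  shows "(\<lambda>w. of_nat (card (active d S t w)) :: ennreal) \<in> borel_measurable (F t)"
proof -
  have "(\<Sum>j\<in>{1..d}. of_bool ((\<Sum>k\<in>{1..d}. S t w j k) < \<infinity>))
      = (of_nat (card (active d S t w)) :: ennreal)" for w
  proof -
    have "active d S t w = {1..d} \<inter> {j. (\<Sum>k\<in>{1..d}. S t w j k) < \<infinity>}"
      unfolding active_def by blast
    then show ?thesis by simp
  qed
  moreover have "(\<lambda>w. \<Sum>j\<in>{1..d}. of_bool ((\<Sum>k\<in>{1..d}. S t w j k) < \<infinity>) :: ennreal)
      \<in> borel_measurable (F t)"
    by (intro borel_measurable_sum) (measurable; simp add: S_measurable[OF t])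
  ultimately show ?thesis by (simp only:)
qed

lemma claim_measurable:
  assumes M: "prob_on T F M" and C: "C \<in> claims d T F S" and j: "j \<in> {1..d}"
  shows "(\<lambda>w. C w j) \<in> borel_measurable M"
    and "(\<lambda>w. C w j / of_nat (card (active d S T w))) \<in> borel_measurable M"
proof -
  have "(\<lambda>w. C w j) \<in> borel_measurable (F T)" using C j unfolding claims_def by auto
  then show Cj: "(\<lambda>w. C w j) \<in> borel_measurable M" using prob_on_measurable[OF M T_in_horizon] by blast
  show "(\<lambda>w. C w j / of_nat (card (active d S T w))) \<in> borel_measurable M"
    using Cj prob_on_measurable[OF M T_in_horizon card_active_measurable[OF T_in_horizon]] by measurable
qed

lemma claim_bar_eq_sum:
  assumes w: "w \<in> \<Omega>"
  shows "claim_bar d T S C w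
    = (\<Sum>j\<in>{1..d}. ennreal (basket d S j T w) * (C w j / of_nat (card (active d S T w))))"
proof -
  have "(\<Sum>j\<in>active d S T w. ennreal (basket d S j T w) * C w j)
      = (\<Sum>j\<in>{1..d}. ennreal (basket d S j T w) * C w j)"
    using ennreal_basket_inactive[OF T_in_horizon w]
    by (intro sum.mono_neutral_left) (auto simp: active_def)
  then show ?thesis unfolding claim_bar_def divide_ennreal_def
    by (simp add: sum_distrib_right mult.assoc)
qed

lemma claim_bar_measurable:
  assumes M: "prob_on T F M" and C: "C \<in> claims d T F S"
  shows "claim_bar d T S C \<in> borel_measurable M"
proof -
  have "(\<lambda>w. \<Sum>j\<in>{1..d}. ennreal (basket d S j T w) * (C w j / of_nat (card (active d S T w))))
      \<in> borel_measurable M"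
    using ennreal_basket_measurable[OF M T_in_horizon] claim_measurable(2)[OF M C]
    by (intro borel_measurable_sum borel_measurable_times_ennreal) auto
  then show ?thesis
    using claim_bar_eq_sum prob_on_space[OF M] by (subst measurable_cong) auto
qed

text \<open>Cbar averages the terms Sbar_j C_j, which agree for all active j.\<close>
lemma claim_bar_active:
  assumes w: "w \<in> \<Omega>" and C: "C \<in> claims d T F S" and i: "i \<in> active d S T w"
  shows "claim_bar d T S C w = ennreal (basket d S i T w) * C w i"
proof -
  interpret exch_matrix d "S T w" using exch_matrix_S T_in_horizon w by auto
  have v: "value_vector d (S T w) (C w)" using C w unfolding claims_def by auto
  have A: "active d S T w = active_set d (S T w)" by (rule active_eq_active_set)
  have term_eq: "ennreal (basket d S j T w) * C w j = ennreal (basket d S i T w) * C w i"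
    if "j \<in> active d S T w" for j
    using value_vector_price_eq[OF v] that i active_set_subset basket_eq_price[OF T_in_horizon w]
    unfolding A by (metis subsetD)
  have n: "(of_nat (card (active d S T w)) :: ennreal) \<noteq> 0"
    using i finite_active_set unfolding A by auto
  have "claim_bar d T S C w
      = (ennreal (basket d S i T w) * C w i * of_nat (card (active d S T w))) / of_nat (card (active d S T w))"
    unfolding claim_bar_def using term_eq by (simp add: mult.commute)
  also have "\<dots> = ennreal (basket d S i T w) * C w i"
    using n by (intro ennreal_mult_divide_eq) auto
  finally show ?thesis .
qed

lemma star_identity_change_of_numeraire:
  assumes V: "valuation_measure d T F S Qb"
    and Q: "\<And>i. i \<in> {1..d} \<Longrightarrow> Q i = density Qb (basket_density i)"
    and r: "r \<in> {0..T}" and C: "C \<in> claims d T F S"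
  shows "star_identity d T F S Q Qb r C"
proof -
  have Qb: "prob_on T F Qb" using V unfolding valuation_measure_def by auto
  interpret sigma_finite_subalgebra Qb "F r" using prob_on_subalgebra[OF Qb r] .
  define X where "X j w = C w j / of_nat (card (active d S T w))" for j w
  define Y where "Y j w = ennreal (basket d S j T w) * X j w" for j w
  have X: "X j \<in> borel_measurable Qb" if "j \<in> {1..d}" for j
    unfolding X_def using claim_measurable(2)[OF Qb C that] .
  have Y: "Y j \<in> borel_measurable Qb" if "j \<in> {1..d}" for j
    unfolding Y_def using X[OF that] ennreal_basket_measurable[OF Qb T_in_horizon that]
    by (intro borel_measurable_times_ennreal)
  have "AE w in Qb. nn_cond_exp Qb (F r) (claim_bar d T S C) w
      = nn_cond_exp Qb (F r) (\<lambda>w. \<Sum>j\<in>{1..d}. Y j w) w"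
  proof (rule nn_cond_exp_cong)
    show "AE w in Qb. claim_bar d T S C w = (\<Sum>j\<in>{1..d}. Y j w)"
      using claim_bar_eq_sum prob_on_space[OF Qb] unfolding X_def Y_def by (intro AE_I2) simp
  qed (use claim_bar_measurable[OF Qb C] Y in auto)
  moreover have "AE w in Qb. nn_cond_exp Qb (F r) (\<lambda>w. \<Sum>j\<in>{1..d}. Y j w) w
      = (\<Sum>j\<in>{1..d}. nn_cond_exp Qb (F r) (Y j) w)"
    using Y by (intro nn_cond_exp_sum_finite) auto
  moreover have "AE w in Qb. \<forall>j\<in>{1..d}. nn_cond_exp Qb (F r) (Y j) w
      = ennreal (basket d S j r w) * nn_cond_exp (Q j) (F r) (X j) w"
  proof (subst AE_finite_all)
    show "\<forall>j\<in>{1..d}. AE w in Qb. nn_cond_exp Qb (F r) (Y j) w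
        = ennreal (basket d S j r w) * nn_cond_exp (Q j) (F r) (X j) w"
      unfolding Y_def using nn_cond_exp_change_of_numeraire[OF V _ _ r X] Q by blast
  qed simp
  ultimately show ?thesis unfolding star_identity_def using AE_space
  proof eventually_elim
    case (elim w)
    then have w: "w \<in> \<Omega>" using prob_on_space[OF Qb] by simp
    have "nn_cond_exp Qb (F r) (claim_bar d T S C) w
        = (\<Sum>j\<in>{1..d}. ennreal (basket d S j r w) * nn_cond_exp (Q j) (F r) (X j) w)"
      using elim by simp
    also have "\<dots> = (\<Sum>j\<in>active d S r w. ennreal (basket d S j r w) * nn_cond_exp (Q j) (F r) (X j) w)"
      using ennreal_basket_inactive[OF r w]
      by (intro sum.mono_neutral_right) (auto simp: active_def)
    finally show ?case unfolding X_def .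
  qed
qed

lemma nn_integral_star_identity_0:
  assumes Qb: "prob_on T F Qb" and NC: "numeraire_consistent d T F S Q"
    and C: "C \<in> claims d T F S" and star: "star_identity d T F S Q Qb 0 C"
  shows "(\<integral>\<^sup>+ w. claim_bar d T S C w \<partial>Qb)
    = (\<Sum>j\<in>{1..d}. ennreal (basket0 j) * (\<integral>\<^sup>+ w. C w j / of_nat (card (active d S T w)) \<partial>Q j))"
proof -
  obtain w where w: "w \<in> \<Omega>" and E0: "nn_cond_exp Qb (F 0) (claim_bar d T S C) w =
      (\<Sum>j\<in>active d S 0 w. ennreal (basket d S j 0 w) *
        nn_cond_exp (Q j) (F 0) (\<lambda>x. C x j / of_nat (card (active d S T x))) w)"
    using prob_on_AE_ex[OF Qb star[unfolded star_identity_def]] by blast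
  have "(\<integral>\<^sup>+ x. claim_bar d T S C x \<partial>Qb) = nn_cond_exp Qb (F 0) (claim_bar d T S C) w"
    using nn_cond_exp_F_0[OF Qb claim_bar_measurable[OF Qb C] w] by simp
  also have "\<dots> = (\<Sum>j\<in>{1..d}. ennreal (basket0 j) * (\<integral>\<^sup>+ w. C w j / of_nat (card (active d S T w)) \<partial>Q j))"
    unfolding E0 active_0[rule_format, OF w]
  proof (rule sum.cong)
    fix j assume j: "j \<in> {1..d}"
    have Qj: "prob_on T F (Q j)" using numeraire_consistent_prob_on[OF NC j] .
    show "ennreal (basket d S j 0 w) * nn_cond_exp (Q j) (F 0) (\<lambda>x. C x j / of_nat (card (active d S T x))) w
        = ennreal (basket0 j) * (\<integral>\<^sup>+ w. C w j / of_nat (card (active d S T w)) \<partial>Q j)"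
      using basket_0[OF w j] nn_cond_exp_F_0[OF Qj claim_measurable(2)[OF Qj C j] w] by simp
  qed simp
  finally show ?thesis .
qed

section \<open>Uniqueness via unit claims\<close>

text \<open>The claim paying one unit of currency i on the event B.\<close>
definition unit_claim :: "nat \<Rightarrow> 'a set \<Rightarrow> 'a \<Rightarrow> nat \<Rightarrow> ennreal" where
  "unit_claim i B = (\<lambda>w j. S T w j i * indicator B w)"

lemma unit_claim_claims:
  assumes i: "i \<in> {1..d}" and B: "B \<in> sets (F T)"
  shows "unit_claim i B \<in> claims d T F S"
  unfolding claims_def unit_claim_def
proof (intro CollectI conjI ballI)
  fix j assume "j \<in> {1..d}"
  then show "(\<lambda>w. S T w j i * indicator B w) \<in> borel_measurable (F T)"
    using S_measurable[OF T_in_horizon _ i] B by (intro borel_measurable_times_ennreal) auto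
next
  fix w assume w: "w \<in> \<Omega>"
  interpret exch_matrix d "S T w" using exch_matrix_S T_in_horizon w by auto
  show "value_vector d (S T w) (\<lambda>j. S T w j i * indicator B w)"
    unfolding value_vector_def
  proof (intro ballI impI)
    fix j k assume j: "j \<in> {1..d}" and k: "k \<in> {1..d}"
      and pd: "prod_defined (S T w j k) (S T w k i * indicator B w)"
    show "S T w j k * (S T w k i * indicator B w) = S T w j i * indicator B w"
    proof (cases "w \<in> B")
      case True
      then show ?thesis using pd compose[OF j k i] by (simp add: mult.assoc[symmetric])
    qed simp
  qed
qed

lemma claim_bar_unit_claim:
  assumes w: "w \<in> \<Omega>" and i: "i \<in> {1..d}" and B: "B \<in> sets (F T)"
  shows "claim_bar d T S (unit_claim i B) w = ennreal (basket d S i T w) * indicator B w"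
proof -
  interpret exch_matrix d "S T w" using exch_matrix_S T_in_horizon w by auto
  show ?thesis
  proof (cases "i \<in> active d S T w")
    case True
    then show ?thesis
      using claim_bar_active[OF w unit_claim_claims[OF i B] True] diag[OF i]
      by (simp add: unit_claim_def)
  next
    case False
    have "S T w j i = 0" if "j \<in> active d S T w" for j
      using active_entry_to_inactive that i False unfolding active_eq_active_set by blast
    then show ?thesis
      using ennreal_basket_inactive[OF T_in_horizon w i False]
      by (simp add: claim_bar_def unit_claim_def)
  qed
qed

lemma L1_nn_claim_bar_unit_claim:
  assumes Qb: "prob_on T F Qb" and i: "i \<in> {1..d}" and B: "B \<in> sets (F T)"
  shows "L1_nn Qb (claim_bar d T S (unit_claim i B))"
  unfolding L1_nn_def
proof
  show "claim_bar d T S (unit_claim i B) \<in> borel_measurable Qb"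
    using claim_bar_measurable[OF Qb unit_claim_claims[OF i B]] .
  interpret prob_space Qb using Qb unfolding prob_on_def by auto
  have "(\<integral>\<^sup>+ w. claim_bar d T S (unit_claim i B) w \<partial>Qb) \<le> (\<integral>\<^sup>+ w. 1 \<partial>Qb)"
  proof (rule nn_integral_mono)
    fix w assume "w \<in> space Qb"
    then have w: "w \<in> \<Omega>" using prob_on_space[OF Qb] by simp
    have "ennreal (basket d S i T w) * indicator B w \<le> 1 * 1"
      using basket_le_1[OF T_in_horizon w i] by (intro mult_mono) (auto simp: indicator_def)
    then show "claim_bar d T S (unit_claim i B) w \<le> 1" using claim_bar_unit_claim[OF w i B] by simp
  qed
  then show "(\<integral>\<^sup>+ w. claim_bar d T S (unit_claim i B) w \<partial>Qb) < \<infinity>"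
    using emeasure_space_1 by (simp add: le_less_trans)
qed

lemma L1_nn_unit_claim:
  assumes NC: "numeraire_consistent d T F S Q" and i: "i \<in> {1..d}" and B: "B \<in> sets (F T)"
    and k: "k \<in> {1..d}"
  shows "L1_nn (Q k) (\<lambda>w. unit_claim i B w k)"
  unfolding L1_nn_def
proof
  have Qk: "prob_on T F (Q k)" using numeraire_consistent_prob_on[OF NC k] .
  interpret Qi: prob_space "Q i" using numeraire_consistent_prob_on[OF NC i] unfolding prob_on_def by auto
  obtain w0 where w0: "w0 \<in> \<Omega>" using prob_on_ex[OF Qk] by auto
  show "(\<lambda>w. unit_claim i B w k) \<in> borel_measurable (Q k)"
    using claim_measurable(1)[OF Qk unit_claim_claims[OF i B] k] .
  have "(\<integral>\<^sup>+ w. unit_claim i B w k \<partial>Q k) = S 0 w0 k i * emeasure (Q i) (B \<inter> {w\<in>\<Omega>. S T w i k > 0})"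
    unfolding unit_claim_def using numeraire_consistentD[OF NC k i T_in_horizon B w0] by simp
  also have "\<dots> < \<top>" using S_0_finite[OF w0 k i]
    by (simp add: ennreal_mult_eq_top_iff Qi.emeasure_finite less_top[symmetric])
  finally show "(\<integral>\<^sup>+ w. unit_claim i B w k \<partial>Q k) < \<infinity>" by simp
qed

lemma numeraire_consistent_unit_claim:
  assumes NC: "numeraire_consistent d T F S Q" and i: "i \<in> {1..d}" and A: "A \<in> sets (F T)"
  shows "(\<Sum>j\<in>{1..d}. ennreal (basket0 j) *
      (\<integral>\<^sup>+ w. unit_claim i A w j / of_nat (card (active d S T w)) \<partial>Q j))
    = ennreal (basket0 i) * emeasure (Q i) A"
proof -
  define n where "n w = (of_nat (card (active d S T w)) :: ennreal)" for w
  define f where "f w = indicator A w / n w" for w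
  define B where "B j = {w\<in>\<Omega>. S T w i j > 0}" for j
  have Qi: "prob_on T F (Q i)" using numeraire_consistent_prob_on[OF NC i] .
  obtain w0 where w0: "w0 \<in> \<Omega>" using prob_on_ex[OF Qi] by auto
  have f: "f \<in> borel_measurable (F T)"
    unfolding f_def n_def using A card_active_measurable[OF T_in_horizon] by measurable
  have Bf: "(\<lambda>w. indicator (B j) w * f w) \<in> borel_measurable (Q i)" if j: "j \<in> {1..d}" for j
    unfolding B_def using positive_entry_set_measurable[OF T_in_horizon i j] f
    by (intro prob_on_measurable[OF Qi T_in_horizon] borel_measurable_times_ennreal
        borel_measurable_indicator)
  have term_eq: "ennreal (basket0 j) * (\<integral>\<^sup>+ w. unit_claim i A w j / n w \<partial>Q j)
      = ennreal (basket0 i) * (\<integral>\<^sup>+ w. indicator (B j) w * f w \<partial>Q i)" if j: "j \<in> {1..d}" for j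
  proof -
    have "(\<integral>\<^sup>+ w. unit_claim i A w j / n w \<partial>Q j) = (\<integral>\<^sup>+ w. S T w j i * f w \<partial>Q j)"
      unfolding unit_claim_def f_def by (simp add: divide_ennreal_def mult.assoc)
    also have "\<dots> = S 0 w0 j i * (\<integral>\<^sup>+ w. indicator (B j) w * f w \<partial>Q i)"
      unfolding B_def using numeraire_consistent_nn_integral[OF NC j i T_in_horizon w0 f] .
    finally show ?thesis unfolding S_0_mult_basket0[OF w0 j i, symmetric] by (simp only: ac_simps)
  qed
  have "(\<Sum>j\<in>{1..d}. ennreal (basket0 j) * (\<integral>\<^sup>+ w. unit_claim i A w j / n w \<partial>Q j))
      = ennreal (basket0 i) * (\<Sum>j\<in>{1..d}. \<integral>\<^sup>+ w. indicator (B j) w * f w \<partial>Q i)"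
    using term_eq by (simp only: sum_distrib_left cong: sum.cong)
  also have "\<dots> = ennreal (basket0 i) * (\<integral>\<^sup>+ w. (\<Sum>j\<in>{1..d}. indicator (B j) w * f w) \<partial>Q i)"
    using Bf by (simp only: nn_integral_sum)
  also have "(\<integral>\<^sup>+ w. (\<Sum>j\<in>{1..d}. indicator (B j) w * f w) \<partial>Q i) = (\<integral>\<^sup>+ w. indicator A w \<partial>Q i)"
  proof (rule nn_integral_cong_AE)
    show "AE w in Q i. (\<Sum>j\<in>{1..d}. indicator (B j) w * f w) = indicator A w"
      using numeraire_consistent_AE_active[OF NC i T_in_horizon] AE_space
    proof eventually_elim
      case (elim w)
      then have w: "w \<in> \<Omega>" using prob_on_space[OF Qi] by simp
      have "(\<Sum>j\<in>{1..d}. indicator (B j) w * f w) = n w * (indicator A w / n w)"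
        using sum_indicator_positive_entries[OF w] elim(1)
        unfolding f_def n_def B_def active_eq_active_set by (simp only: sum_distrib_right[symmetric])
      also have "\<dots> = indicator A w"
        using card_active_pos[OF T_in_horizon w] unfolding n_def
        by (simp add: ennreal_times_divide ennreal_mult_divide_eq mult.commute)
      finally show ?case .
    qed
  qed
  also have "\<dots> = emeasure (Q i) A" using A prob_on_sets[OF Qi] by simp
  finally show ?thesis unfolding n_def .
qed

lemma change_of_numeraire_of_star_identity:
  assumes Qb: "prob_on T F Qb" and NC: "numeraire_consistent d T F S Q"
    and star: "\<And>i B. i \<in> {1..d} \<Longrightarrow> B \<in> sets (F T) \<Longrightarrow> star_identity d T F S Q Qb 0 (unit_claim i B)"
  shows "change_of_numeraire Q Qb"
  unfolding change_of_numeraire_def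
proof (intro ballI)
  fix i A assume i: "i \<in> {1..d}" and A: "A \<in> sets (F T)"
  have "(\<integral>\<^sup>+ w. ennreal (basket d S i T w) * indicator A w \<partial>Qb)
      = (\<integral>\<^sup>+ w. claim_bar d T S (unit_claim i A) w \<partial>Qb)"
    using claim_bar_unit_claim[OF _ i A] prob_on_space[OF Qb] by (intro nn_integral_cong) simp
  also have "\<dots> = ennreal (basket0 i) * emeasure (Q i) A"
    unfolding nn_integral_star_identity_0[OF Qb NC unit_claim_claims[OF i A] star[OF i A]]
    by (rule numeraire_consistent_unit_claim[OF NC i A])
  finally show "ennreal (basket0 i) * emeasure (Q i) A
      = (\<integral>\<^sup>+ w. ennreal (basket d S i T w) * indicator A w \<partial>Qb)" ..
qed

section \<open>The basket mixture of a numeraire-consistent family\<close>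

definition basket_mixture :: "(nat \<Rightarrow> 'a measure) \<Rightarrow> 'a measure" where
  "basket_mixture Q = mixture_measure (F T) {1..d} (\<lambda>i. ennreal (basket0 i)) Q"

lemma space_basket_mixture [simp]: "space (basket_mixture Q) = \<Omega>"
  and sets_basket_mixture [simp]: "sets (basket_mixture Q) = sets (F T)"
  unfolding basket_mixture_def by simp_all

lemma emeasure_basket_mixture:
  assumes NC: "numeraire_consistent d T F S Q" and A: "A \<in> sets (F T)"
  shows "emeasure (basket_mixture Q) A = (\<Sum>i\<in>{1..d}. ennreal (basket0 i) * emeasure (Q i) A)"
  unfolding basket_mixture_def
  using numeraire_consistent_prob_on[OF NC] prob_on_sets A by (intro emeasure_mixture_measure) auto

lemma nn_integral_basket_mixture:
  assumes NC: "numeraire_consistent d T F S Q" and f: "f \<in> borel_measurable (F T)"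
  shows "(\<integral>\<^sup>+ w. f w \<partial>basket_mixture Q) = (\<Sum>i\<in>{1..d}. ennreal (basket0 i) * (\<integral>\<^sup>+ w. f w \<partial>Q i))"
  unfolding basket_mixture_def
  using numeraire_consistent_prob_on[OF NC] prob_on_sets f by (intro nn_integral_mixture_measure) auto

lemma prob_on_basket_mixture:
  assumes NC: "numeraire_consistent d T F S Q"
  shows "prob_on T F (basket_mixture Q)"
proof -
  obtain w0 where w0: "w0 \<in> \<Omega>" using prob_on_ex numeraire_consistent_prob_on[OF NC, of 1] d_ge_1 by auto
  have "emeasure (basket_mixture Q) \<Omega> = (\<Sum>i\<in>{1..d}. ennreal (basket0 i) * emeasure (Q i) \<Omega>)"
    by (simp add: emeasure_basket_mixture[OF NC])
  also have "\<dots> = (\<Sum>i\<in>{1..d}. ennreal (basket0 i))"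
  proof (rule sum.cong)
    fix i assume "i \<in> {1..d}"
    then have Qi: "prob_on T F (Q i)" by (rule numeraire_consistent_prob_on[OF NC])
    then interpret prob_space "Q i" unfolding prob_on_def by auto
    show "ennreal (basket0 i) * emeasure (Q i) \<Omega> = ennreal (basket0 i)"
      using emeasure_space_1 prob_on_space[OF Qi] by simp
  qed simp
  also have "\<dots> = 1" using sum_basket[OF zero_in_horizon w0] basket_0[OF w0] by simp
  finally have "prob_space (basket_mixture Q)" by (intro prob_spaceI) simp
  then show ?thesis unfolding prob_on_def by simp
qed

text \<open>Numeraire consistency moves each weighted integral under Q_k to one under Q_i, where the
  weights add up to Sum_k Sbar_k(t) = 1.\<close>
lemma nn_integral_basket_mixture_basket:
  assumes NC: "numeraire_consistent d T F S Q" and t: "t \<in> {0..T}" and i: "i \<in> {1..d}"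
    and A: "A \<in> sets (F t)"
  shows "(\<integral>\<^sup>+ w. ennreal (basket d S i t w) * indicator A w \<partial>basket_mixture Q)
    = ennreal (basket0 i) * emeasure (Q i) A"
proof -
  have Qi: "prob_on T F (Q i)" using numeraire_consistent_prob_on[OF NC i] .
  have AT: "A \<in> sets (F T)" using A sets_F_subset[OF t] by auto
  have ind: "indicator A \<in> borel_measurable (F t)" using A by simp
  have bk: "(\<lambda>w. indicator A w * ennreal (basket d S k t w)) \<in> borel_measurable (Q i)" if "k \<in> {1..d}" for k
    using ennreal_basket_measurable[OF Qi t that] AT prob_on_sets[OF Qi] by simp
  have "(\<integral>\<^sup>+ w. ennreal (basket d S i t w) * indicator A w \<partial>basket_mixture Q)
      = (\<Sum>k\<in>{1..d}. ennreal (basket0 k) * (\<integral>\<^sup>+ w. indicator A w * ennreal (basket d S i t w) \<partial>Q k))"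
    using measurable_compose[OF basket_measurable[OF t i] measurable_ennreal] ind
    by (subst nn_integral_basket_mixture[OF NC])
      (auto simp: mult.commute intro!: F_measurable_F_T[OF t] borel_measurable_times_ennreal)
  also have "\<dots> = (\<Sum>k\<in>{1..d}. ennreal (basket0 i) * (\<integral>\<^sup>+ w. indicator A w * ennreal (basket d S k t w) \<partial>Q i))"
    using numeraire_consistent_basket_symmetric[OF NC _ i t ind] by (intro sum.cong) auto
  also have "\<dots> = ennreal (basket0 i) * (\<integral>\<^sup>+ w. (\<Sum>k\<in>{1..d}. indicator A w * ennreal (basket d S k t w)) \<partial>Q i)"
    using bk by (simp only: nn_integral_sum sum_distrib_left)
  also have "\<dots> = ennreal (basket0 i) * (\<integral>\<^sup>+ w. indicator A w * (\<Sum>k\<in>{1..d}. ennreal (basket d S k t w)) \<partial>Q i)"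
    by (simp only: sum_distrib_left)
  also have "\<dots> = ennreal (basket0 i) * (\<integral>\<^sup>+ w. indicator A w \<partial>Q i)"
    using sum_basket[OF t] prob_on_space[OF Qi] by (intro arg_cong2[where f="(*)"] refl nn_integral_cong) simp
  also have "\<dots> = ennreal (basket0 i) * emeasure (Q i) A"
    using AT prob_on_sets[OF Qi] by simp
  finally show ?thesis .
qed

lemma valuation_measure_basket_mixture:
  assumes NC: "numeraire_consistent d T F S Q"
  shows "valuation_measure d T F S (basket_mixture Q)"
proof (rule valuation_measureI[OF prob_on_basket_mixture[OF NC]])
  fix i s t assume i: "i \<in> {1..d}" and st: "0 \<le> s" "s \<le> t" "t \<le> T"
  then have s: "s \<in> {0..T}" and t: "t \<in> {0..T}" by auto
  interpret sigma_finite_subalgebra "basket_mixture Q" "F s"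
    using prob_on_subalgebra[OF prob_on_basket_mixture[OF NC] s] .
  have "AE w in basket_mixture Q.
      ennreal (basket d S i s w) = nn_cond_exp (basket_mixture Q) (F s) (\<lambda>w. ennreal (basket d S i t w)) w"
  proof (rule nn_cond_exp_charact)
    fix A assume A: "A \<in> sets (F s)"
    then have "A \<in> sets (F t)" using sets_F_mono[OF st] by auto
    then show "(\<integral>\<^sup>+ w\<in>A. ennreal (basket d S i t w) \<partial>basket_mixture Q)
        = (\<integral>\<^sup>+ w\<in>A. ennreal (basket d S i s w) \<partial>basket_mixture Q)"
      using nn_integral_basket_mixture_basket[OF NC _ i] A s t by simp
  next
    show "(\<lambda>w. ennreal (basket d S i t w)) \<in> borel_measurable (basket_mixture Q)"
      using ennreal_basket_measurable[OF prob_on_basket_mixture[OF NC] t i] .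
    show "(\<lambda>w. ennreal (basket d S i s w)) \<in> borel_measurable (F s)"
      using basket_measurable[OF s i] by (rule measurable_compose[OF _ measurable_ennreal])
  qed
  then show "AE w in basket_mixture Q.
      nn_cond_exp (basket_mixture Q) (F s) (\<lambda>w. ennreal (basket d S i t w)) w = ennreal (basket d S i s w)"
    by (auto elim: eventually_mono)
qed

lemma change_of_numeraire_basket_mixture:
  "numeraire_consistent d T F S Q \<Longrightarrow> change_of_numeraire Q (basket_mixture Q)"
  unfolding change_of_numeraire_def using nn_integral_basket_mixture_basket[OF _ T_in_horizon] by simp

lemma basket_mixture_unique:
  assumes Qb: "prob_on T F Qb" and NC: "numeraire_consistent d T F S Q"
    and CN: "change_of_numeraire Q Qb"
  shows "Qb = basket_mixture Q"
proof (rule measure_eqI)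
  show "sets Qb = sets (basket_mixture Q)" using prob_on_sets[OF Qb] by simp
  fix A assume "A \<in> sets Qb"
  then have A: "A \<in> sets (F T)" using prob_on_sets[OF Qb] by simp
  show "emeasure Qb A = emeasure (basket_mixture Q) A"
    using emeasure_change_of_numeraire[OF Qb CN A] emeasure_basket_mixture[OF NC A] by simp
qed

lemma density_eq_of_star_identity:
  assumes Qb: "prob_on T F Qb" and NC: "numeraire_consistent d T F S Q"
    and star: "\<forall>r\<in>{0..T}. \<forall>C\<in>claims d T F S. L1_nn Qb (claim_bar d T S C) \<longrightarrow>
      star_identity d T F S Q Qb r C"
    and i: "i \<in> {1..d}"
  shows "Q i = density Qb (basket_density i)"
proof -
  have "change_of_numeraire Q Qb"
    using star unit_claim_claims L1_nn_claim_bar_unit_claim[OF Qb] zero_in_horizon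
    by (intro change_of_numeraire_of_star_identity[OF Qb NC]) blast
  then show ?thesis
    using change_of_numeraire_eq_density[of Qb Q i, OF Qb numeraire_consistent_prob_on[OF NC i] _ i] by blast
qed

lemma basket_mixture_eq_of_star_identity:
  assumes Qb: "prob_on T F Qb" and NC: "numeraire_consistent d T F S Q"
    and star: "\<forall>r\<in>{0..T}. \<forall>C\<in>claims d T F S. (\<forall>i\<in>{1..d}. L1_nn (Q i) (\<lambda>w. C w i)) \<longrightarrow>
      star_identity d T F S Q Qb r C"
  shows "Qb = basket_mixture Q"
proof -
  have "change_of_numeraire Q Qb"
    using star unit_claim_claims L1_nn_unit_claim[OF NC] zero_in_horizon
    by (intro change_of_numeraire_of_star_identity[OF Qb NC]) blast
  then show ?thesis by (rule basket_mixture_unique[OF Qb NC])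
qed

lemma nn_cond_exp_claim_on_currency:
  assumes V: "valuation_measure d T F S Qb" and NC: "numeraire_consistent d T F S Q"
    and star: "\<forall>r\<in>{0..T}. \<forall>C\<in>claims d T F S. L1_nn Qb (claim_bar d T S C) \<longrightarrow>
      star_identity d T F S Q Qb r C"
    and r: "r \<in> {0..T}" and C: "C \<in> claims d T F S" and i: "i \<in> {1..d}"
    and only_i: "AE w in Qb. claim_bar d T S C w = claim_bar d T S C w * indicator {x. i \<in> active d S T x} w"
  shows "AE w in Qb. nn_cond_exp Qb (F r) (claim_bar d T S C) w
    = ennreal (basket d S i r w) * nn_cond_exp (Q i) (F r) (\<lambda>x. C x i) w"
proof -
  have Qb: "prob_on T F Qb" using V unfolding valuation_measure_def by auto
  interpret sigma_finite_subalgebra Qb "F r" using prob_on_subalgebra[OF Qb r] .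
  have Ci: "(\<lambda>x. C x i) \<in> borel_measurable Qb" using claim_measurable(1)[OF Qb C i] .
  have "AE w in Qb. claim_bar d T S C w = ennreal (basket d S i T w) * C w i"
    using only_i AE_space
  proof eventually_elim
    case (elim w)
    then have w: "w \<in> \<Omega>" using prob_on_space[OF Qb] by simp
    show ?case
    proof (cases "i \<in> active d S T w")
      case True
      then show ?thesis using claim_bar_active[OF w C] by simp
    next
      case False
      then show ?thesis using elim(1) ennreal_basket_inactive[OF T_in_horizon w i] by simp
    qed
  qed
  then have "AE w in Qb. nn_cond_exp Qb (F r) (claim_bar d T S C) w
      = nn_cond_exp Qb (F r) (\<lambda>x. ennreal (basket d S i T x) * C x i) w"
    using claim_bar_measurable[OF Qb C] ennreal_basket_measurable[OF Qb T_in_horizon i] Ci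
    by (intro nn_cond_exp_cong borel_measurable_times_ennreal) auto
  moreover have "AE w in Qb. nn_cond_exp Qb (F r) (\<lambda>x. ennreal (basket d S i T x) * C x i) w
      = ennreal (basket d S i r w) * nn_cond_exp (Q i) (F r) (\<lambda>x. C x i) w"
    using density_eq_of_star_identity[OF Qb NC star i]
    by (intro nn_cond_exp_change_of_numeraire[OF V i _ r Ci])
  ultimately show ?thesis by eventually_elim simp
qed

lemma valuation_measure_determines_numeraire_family:
  assumes V: "valuation_measure d T F S Qb"
  shows "\<exists>Q. numeraire_consistent d T F S Q \<and> equiv_sum d T F Q Qb \<and>
    (\<forall>r\<in>{0..T}. \<forall>C\<in>claims d T F S. L1_nn Qb (claim_bar d T S C) \<longrightarrow>
      star_identity d T F S Q Qb r C) \<and>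
    (\<forall>Q'. numeraire_consistent d T F S Q' \<and> equiv_sum d T F Q' Qb \<and>
      (\<forall>r\<in>{0..T}. \<forall>C\<in>claims d T F S. L1_nn Qb (claim_bar d T S C) \<longrightarrow>
        star_identity d T F S Q' Qb r C)
      \<longrightarrow> (\<forall>i\<in>{1..d}. Q' i = Q i))"
proof -
  have Qb: "prob_on T F Qb" using V unfolding valuation_measure_def by simp
  let ?Q = "\<lambda>i. density Qb (basket_density i)"
  have "star_identity d T F S ?Q Qb r C" if "r \<in> {0..T}" "C \<in> claims d T F S" for r C
    using star_identity_change_of_numeraire[OF V _ that] by simp
  moreover have "Q' i = ?Q i"
    if "numeraire_consistent d T F S Q'" "\<forall>r\<in>{0..T}. \<forall>C\<in>claims d T F S.
      L1_nn Qb (claim_bar d T S C) \<longrightarrow> star_identity d T F S Q' Qb r C" "i \<in> {1..d}" for Q' i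
    using density_eq_of_star_identity[OF Qb that] .
  ultimately show ?thesis
    using numeraire_consistent_basket_densities[OF V]
      change_of_numeraire_equiv_sum[OF Qb change_of_numeraire_densities[OF Qb]]
    by (intro exI[of _ ?Q]) blast
qed

lemma numeraire_family_determines_valuation_measure:
  assumes NC: "numeraire_consistent d T F S Q"
  shows "\<exists>!Qb. valuation_measure d T F S Qb \<and> equiv_sum d T F Q Qb \<and>
    (\<forall>r\<in>{0..T}. \<forall>C\<in>claims d T F S. (\<forall>i\<in>{1..d}. L1_nn (Q i) (\<lambda>w. C w i)) \<longrightarrow>
      star_identity d T F S Q Qb r C)"
proof -
  have Qb: "prob_on T F (basket_mixture Q)" using prob_on_basket_mixture[OF NC] .
  have CN: "change_of_numeraire Q (basket_mixture Q)" using change_of_numeraire_basket_mixture[OF NC] .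
  have "Q i = density (basket_mixture Q) (basket_density i)" if "i \<in> {1..d}" for i
    using change_of_numeraire_eq_density[OF Qb numeraire_consistent_prob_on[OF NC that] CN that] .
  then show ?thesis
    using valuation_measure_basket_mixture[OF NC] change_of_numeraire_equiv_sum[OF Qb CN]
      star_identity_change_of_numeraire[OF valuation_measure_basket_mixture[OF NC]]
      basket_mixture_eq_of_star_identity[OF _ NC] valuation_measure_def
    by (intro ex1I[of _ "basket_mixture Q"]) blast+
qed

end

theorem mainTheorem2:
  fixes d :: nat and T :: real and F :: "real \<Rightarrow> 'a measure"
    and S :: "real \<Rightarrow> 'a \<Rightarrow> nat \<Rightarrow> nat \<Rightarrow> ennreal"
  assumes d: "d \<ge> 1"
    and filt: "filtration T F"
    and proc: "exchange_process d T F S"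
    and act0: "\<forall>w\<in>space (F T). active d S 0 w = {1..d}"
  shows
    "(\<forall>Qb. valuation_measure d T F S Qb \<longrightarrow>
        (\<exists>Q. numeraire_consistent d T F S Q \<and> equiv_sum d T F Q Qb \<and>
             (\<forall>r\<in>{0..T}. \<forall>C\<in>claims d T F S. L1_nn Qb (claim_bar d T S C) \<longrightarrow>
                 star_identity d T F S Q Qb r C) \<and>
             (\<forall>Q'. numeraire_consistent d T F S Q' \<and> equiv_sum d T F Q' Qb \<and>
                 (\<forall>r\<in>{0..T}. \<forall>C\<in>claims d T F S. L1_nn Qb (claim_bar d T S C) \<longrightarrow>
                     star_identity d T F S Q' Qb r C)
               \<longrightarrow> (\<forall>i\<in>{1..d}. Q' i = Q i))))
   \<and> (\<forall>Q. numeraire_consistent d T F S Q \<longrightarrow>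
        (\<exists>!Qb. valuation_measure d T F S Qb \<and> equiv_sum d T F Q Qb \<and>
             (\<forall>r\<in>{0..T}. \<forall>C\<in>claims d T F S. (\<forall>i\<in>{1..d}. L1_nn (Q i) (\<lambda>w. C w i)) \<longrightarrow>
                 star_identity d T F S Q Qb r C)))
   \<and> (\<forall>Qb Q r C i. valuation_measure d T F S Qb \<and>
        numeraire_consistent d T F S Q \<and> equiv_sum d T F Q Qb \<and>
        (\<forall>r\<in>{0..T}. \<forall>C\<in>claims d T F S. L1_nn Qb (claim_bar d T S C) \<longrightarrow>
            star_identity d T F S Q Qb r C) \<and>
        r \<in> {0..T} \<and> C \<in> claims d T F S \<and> i \<in> {1..d} \<and>
        (AE w in Qb. claim_bar d T S C w =
            claim_bar d T S C w * indicator {x. i \<in> active d S T x} w) \<and>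
        L1_nn Qb (claim_bar d T S C)
      \<longrightarrow> (AE w in Qb. nn_cond_exp Qb (F r) (claim_bar d T S C) w =
            ennreal (basket d S i r w) * nn_cond_exp (Q i) (F r) (\<lambda>x. C x i) w))"
proof -
  interpret exchange_market d T F S using assms by unfold_locales
  show ?thesis
    using valuation_measure_determines_numeraire_family numeraire_family_determines_valuation_measure
      nn_cond_exp_claim_on_currency
    by blast
qed

end
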